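(* In the group $\mathrm{Aut}\, F_2$, $$\mathrm{Aut}\, F_2 = \Lambda\Psi\Phi^*\Delta = \Psi(\Sigma_0^{-1})^*\Lambda\, \varphi_{a,ba}^*\,(\varphi_{a^{-1},b}\cup \varphi_{a^{-1},b^{-1}}).$$
   Context: $F_2$ is the free group on $\{a,b\}$. For $x,y\in F_2$, $\varphi_{x,y}$ is the endomorphism of $F_2$ mapping $a$ to $x$ and $b$ to $y$. Products of subsets of $\mathrm{Aut}\, F_2$ are taken elementwise with the group law (composition, $(\sigma\tau)(u)=\sigma(\tau(u))$); for a subset $X$, $X^*$ is the submonoid generated by $X$, $X^{-1}$ is the set of inverses, and for a single automorphism $\varphi$, $\varphi^* = \{\varphi^n : n\ge 0\}$. The sets are: $\Sigma_0 = \{ \varphi_{a,ba}, \varphi_{b^{-1},a^{-1}}\}$; $\Phi = \{ \varphi_{a,ba}, \varphi_{ab,b},\varphi_{a,ab}, \varphi_{ba,b}\}$; $\Delta = \{ \varphi_{a,a^mb^{\epsilon}a^n} : m,n \in \mathbb{Z},\ \epsilon \in \{ 1,-1\}\}$; $\Psi = \{ \varphi \in \mathrm{Aut}\, F_2 : |\varphi(a)| = |\varphi(b)| = 1\}$ (with $|g|$ the length of the reduced word representing $g$); $\Lambda = \{ \lambda_w : w \in F_2\}$, where $\lambda_w$ is the inner automorphism $u\mapsto w^{-1}uw$. *)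

theory Defs
  imports Main
begin

datatype gen = GA | GB

text \<open>A letter is a generator together with a flag: False = the generator, True = its inverse.\<close>
type_synonym letter = "gen \<times> bool"

definition inv_letter :: "letter \<Rightarrow> letter" where
  "inv_letter l = (fst l, \<not> snd l)"

fun cons_red :: "letter \<Rightarrow> letter list \<Rightarrow> letter list" where
  "cons_red x [] = [x]"
| "cons_red x (y # ys) = (if y = inv_letter x then ys else x # y # ys)"

definition red :: "letter list \<Rightarrow> letter list" where
  "red w = foldr cons_red w []"

definition reduced :: "letter list \<Rightarrow> bool" where
  "reduced w = (\<forall>i. Suc i < length w \<longrightarrow> w ! Suc i \<noteq> inv_letter (w ! i))"

definition F2 :: "letter list set" where
  "F2 = {w. reduced w}"

definition gmult :: "letter list \<Rightarrow> letter list \<Rightarrow> letter list" where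
  "gmult u v = red (u @ v)"

definition ginv :: "letter list \<Rightarrow> letter list" where
  "ginv w = rev (map inv_letter w)"

definition gpow :: "letter list \<Rightarrow> int \<Rightarrow> letter list" where
  "gpow w n = (if 0 \<le> n then red (concat (replicate (nat n) w))
               else red (concat (replicate (nat (- n)) (ginv w))))"

definition ga :: "letter list" where "ga = [(GA, False)]"
definition gb :: "letter list" where "gb = [(GB, False)]"

fun limg :: "letter list \<Rightarrow> letter list \<Rightarrow> letter \<Rightarrow> letter list" where
  "limg x y (GA, e) = (if e then ginv x else x)"
| "limg x y (GB, e) = (if e then ginv y else y)"

text \<open>phi x y is the endomorphism a \<mapsto> x, b \<mapsto> y (defined on all words, output reduced).\<close>
definition phi :: "letter list \<Rightarrow> letter list \<Rightarrow> letter list \<Rightarrow> letter list" where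
  "phi x y w = red (concat (map (limg x y) w))"

definition AutF2 :: "(letter list \<Rightarrow> letter list) set" where
  "AutF2 = {phi x y | x y. x \<in> F2 \<and> y \<in> F2 \<and> bij_betw (phi x y) F2 F2}"

text \<open>Identity automorphism (as a function on all words it is free reduction).\<close>
definition idA :: "letter list \<Rightarrow> letter list" where
  "idA = phi ga gb"

definition autinv :: "(letter list \<Rightarrow> letter list) \<Rightarrow> (letter list \<Rightarrow> letter list)" where
  "autinv f = (THE g. g \<in> AutF2 \<and> (\<forall>w\<in>F2. g (f w) = w))"

definition setprod :: "('b \<Rightarrow> 'c) set \<Rightarrow> ('a \<Rightarrow> 'b) set \<Rightarrow> ('a \<Rightarrow> 'c) set" (infixl "\<cdot>\<cdot>" 70) where
  "X \<cdot>\<cdot> Y = {f \<circ> g | f g. f \<in> X \<and> g \<in> Y}"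

definition setinv :: "(letter list \<Rightarrow> letter list) set \<Rightarrow> (letter list \<Rightarrow> letter list) set" where
  "setinv X = autinv ` X"

inductive_set mstar :: "(letter list \<Rightarrow> letter list) set \<Rightarrow> (letter list \<Rightarrow> letter list) set"
  for X where
  unit: "idA \<in> mstar X"
| step: "f \<in> X \<Longrightarrow> g \<in> mstar X \<Longrightarrow> f \<circ> g \<in> mstar X"

definition lam :: "letter list \<Rightarrow> letter list \<Rightarrow> letter list" where
  "lam w u = gmult (gmult (ginv w) u) w"

definition Sigma0 :: "(letter list \<Rightarrow> letter list) set" where
  "Sigma0 = {phi ga (gmult gb ga), phi (ginv gb) (ginv ga)}"

definition PhiS :: "(letter list \<Rightarrow> letter list) set" where
  "PhiS = {phi ga (gmult gb ga), phi (gmult ga gb) gb, phi ga (gmult ga gb), phi (gmult gb ga) gb}"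

definition DeltaS :: "(letter list \<Rightarrow> letter list) set" where
  "DeltaS = {phi ga (gmult (gmult (gpow ga m) (gpow gb e)) (gpow ga n)) | m n e.
               e \<in> {1, -1}}"

definition PsiS :: "(letter list \<Rightarrow> letter list) set" where
  "PsiS = {f \<in> AutF2. length (f ga) = 1 \<and> length (f gb) = 1}"

definition LambdaS :: "(letter list \<Rightarrow> letter list) set" where
  "LambdaS = {lam w | w. w \<in> F2}"

end

(* Nielsen's method.  An automorphism phi x y with |x| + |y| > 2 can always be shortened by one
   of the eight elementary moves a -> a b^{+-1}, a -> b^{+-1} a, ... followed by an inner
   automorphism.  Otherwise each neighbour of a letter cancels at most half of its image, and
   not both exactly half, so the image of every letter keeps a nonempty middle part: phi x y
   does not shorten reduced words, the preimages of a and b are single letters, and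
   |x| = |y| = 1.  Hence Aut F2 is generated by the letter permutations Psi, the moves and the
   inner automorphisms Lambda.  Both product sets contain the identity, consist of
   automorphisms and are closed under left multiplication by these generators: a move commutes
   past Psi up to another move and is then absorbed by explicit relations (Q_i P_j lies in
   Lambda Psi Phi, Q_i Delta in Psi Phi Delta, P_1 Q_4 in Lambda Psi Q_1, ...). *)

theory Submission
  imports Defs
begin

section \<open>Free reduction\<close>

lemma inv_letter_inv [simp]: "inv_letter (inv_letter l) = l"
  by (cases l) (simp add: inv_letter_def)

lemma inv_letter_neq [simp]: "inv_letter l \<noteq> l" "l \<noteq> inv_letter l"
  by (cases l, simp add: inv_letter_def)+

lemma fst_inv_letter [simp]: "fst (inv_letter l) = fst l"
  by (simp add: inv_letter_def)

definition prepend_red :: "letter list \<Rightarrow> letter list \<Rightarrow> letter list" where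
  "prepend_red u z = foldr cons_red u z"

lemma prepend_red_Nil [simp]: "prepend_red [] z = z"
  by (simp add: prepend_red_def)

lemma prepend_red_Cons [simp]: "prepend_red (x # u) z = cons_red x (prepend_red u z)"
  by (simp add: prepend_red_def)

lemma prepend_red_append: "prepend_red (u @ v) z = prepend_red u (prepend_red v z)"
  by (simp add: prepend_red_def)

lemma red_eq_prepend_red: "red w = prepend_red w []"
  by (simp add: red_def prepend_red_def)

lemma red_Nil [simp]: "red [] = []"
  by (simp add: red_def)

lemma red_Cons: "red (x # w) = cons_red x (red w)"
  by (simp add: red_def)

lemma reduced_Nil [simp]: "reduced []"
  by (simp add: reduced_def)

lemma reduced_Cons_Cons: "reduced (x # y # ys) \<longleftrightarrow> y \<noteq> inv_letter x \<and> reduced (y # ys)"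
  unfolding reduced_def
proof safe
  fix i assume "\<forall>i. Suc i < length (x # y # ys) \<longrightarrow> (x # y # ys) ! Suc i \<noteq> inv_letter ((x # y # ys) ! i)"
    and "Suc i < length (y # ys)" "(y # ys) ! Suc i = inv_letter ((y # ys) ! i)"
  then show False by (metis Suc_less_eq length_Cons nth_Cons_Suc)
next
  fix i assume "y \<noteq> inv_letter x" "\<forall>i. Suc i < length (y # ys) \<longrightarrow> (y # ys) ! Suc i \<noteq> inv_letter ((y # ys) ! i)"
    and "Suc i < length (x # y # ys)" "(x # y # ys) ! Suc i = inv_letter ((x # y # ys) ! i)"
  then show False by (cases i) auto
qed (metis length_Cons nth_Cons_0 nth_Cons_Suc zero_less_Suc Suc_less_eq)

lemma reduced_single [simp]: "reduced [x]"
  by (simp add: reduced_def)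

lemma reduced_Cons: "reduced (x # ys) \<longleftrightarrow> reduced ys \<and> (ys = [] \<or> hd ys \<noteq> inv_letter x)"
  by (cases ys) (auto simp: reduced_Cons_Cons)

lemma reduced_two_iff: "reduced [l, m] \<longleftrightarrow> m \<noteq> inv_letter l"
  by (simp add: reduced_Cons)

lemma reduced_cons_red: "reduced z \<Longrightarrow> reduced (cons_red x z)"
  by (cases z) (auto simp: reduced_Cons)

lemma reduced_prepend_red [simp]: "reduced z \<Longrightarrow> reduced (prepend_red u z)"
  by (induction u) (auto intro: reduced_cons_red)

lemma reduced_red [simp]: "reduced (red w)"
  by (simp add: red_eq_prepend_red)

lemma cons_red_reduced: "reduced (x # z) \<Longrightarrow> cons_red x z = x # z"
  by (cases z) (auto simp: reduced_Cons)

lemma red_reduced: "reduced w \<Longrightarrow> red w = w"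
  by (induction w) (auto simp: red_Cons reduced_Cons cons_red_reduced)

lemma red_red [simp]: "red (red w) = red w"
  by (simp add: red_reduced)

lemma cons_red_cancel: "reduced z \<Longrightarrow> cons_red x (cons_red (inv_letter x) z) = z"
  by (cases z) (auto simp: cons_red_reduced)

lemma cons_red_cancel': "reduced z \<Longrightarrow> cons_red (inv_letter x) (cons_red x z) = z"
  using cons_red_cancel[of z "inv_letter x"] by simp

lemma prepend_red_red: "reduced z \<Longrightarrow> prepend_red (red u) z = prepend_red u z"
proof (induction u)
  case (Cons x u)
  show ?case
  proof (cases "\<exists>t. red u = inv_letter x # t")
    case True
    then obtain t where t: "red u = inv_letter x # t" by blast
    have "prepend_red (red (x # u)) z = prepend_red t z"
      using t by (simp add: red_Cons)
    also have "\<dots> = cons_red x (cons_red (inv_letter x) (prepend_red t z))"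
      by (simp add: cons_red_cancel Cons.prems)
    also have "\<dots> = prepend_red (x # u) z"
      using t Cons by simp
    finally show ?thesis .
  next
    case False
    then have "red (x # u) = x # red u"
      by (cases "red u") (auto simp: red_Cons)
    then show ?thesis using Cons by simp
  qed
qed simp

lemma red_append: "red (u @ v) = prepend_red u (red v)"
  by (simp add: red_eq_prepend_red prepend_red_append)

lemma red_append_red1 [simp]: "red (red u @ v) = red (u @ v)"
  by (simp add: red_append prepend_red_red)

lemma red_append_red2 [simp]: "red (u @ red v) = red (u @ v)"
  by (simp add: red_append)

lemma red_mid_red [simp]: "red (a @ red b @ c) = red (a @ b @ c)"
  by (simp add: red_append prepend_red_red)

lemma red_tail_red [simp]:
  "red (a @ b @ red c) = red (a @ b @ c)" "red (a @ x # red c) = red (a @ x # c)"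
  by (simp_all add: red_append red_Cons)

lemma red_Cons_inv [simp]: "red (x # inv_letter x # t) = red t" "red (inv_letter x # x # t) = red t"
  by (simp_all add: red_Cons cons_red_cancel cons_red_cancel')

lemma red_single [simp]: "red [x] = [x]"
  by (simp add: red_reduced)

lemma length_red_le: "length (red w) \<le> length w"
proof (induction w)
  case (Cons x w)
  then show ?case by (cases "red w") (auto simp: red_Cons)
qed simp

lemma reduced_append: "reduced (xs @ ys) \<Longrightarrow> reduced xs \<and> reduced ys"
  by (induction xs) (auto simp: reduced_Cons)

lemma reduced_take: "reduced xs \<Longrightarrow> reduced (take n xs)"
  using reduced_append[of "take n xs" "drop n xs"] by simp

lemma reduced_drop: "reduced xs \<Longrightarrow> reduced (drop n xs)"
  using reduced_append[of "take n xs" "drop n xs"] by simp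

lemma reduced_snoc: "reduced (ys @ [x]) \<longleftrightarrow> reduced ys \<and> (ys = [] \<or> x \<noteq> inv_letter (last ys))"
proof (induction ys)
  case (Cons y ys)
  then show ?case by (cases ys) (auto simp: reduced_Cons)
qed simp

lemma reduced_append_overlap:
  "reduced (A @ B) \<Longrightarrow> reduced (B @ C) \<Longrightarrow> B \<noteq> [] \<Longrightarrow> reduced (A @ B @ C)"
proof (induction A)
  case (Cons a A)
  moreover have "hd (A @ B @ C) = hd (A @ B)" using Cons.prems(3) by (cases A) auto
  ultimately show ?case by (auto simp: reduced_Cons)
qed simp

lemma reduced_replicate: "reduced (replicate n l)"
  by (induction n) (auto simp: reduced_Cons)

lemma ginv_Nil [simp]: "ginv [] = []" by (simp add: ginv_def)
lemma ginv_Cons [simp]: "ginv (x # w) = ginv w @ [inv_letter x]" by (simp add: ginv_def)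
lemma ginv_append [simp]: "ginv (u @ v) = ginv v @ ginv u" by (simp add: ginv_def rev_map)
lemma ginv_ginv [simp]: "ginv (ginv u) = u" by (simp add: ginv_def rev_map comp_def)
lemma length_ginv [simp]: "length (ginv u) = length u" by (simp add: ginv_def)
lemma ginv_eq_Nil [simp]: "ginv u = [] \<longleftrightarrow> u = []" by (simp add: ginv_def)

lemma ginv_drop: "ginv (drop d u) = take (length u - d) (ginv u)"
  by (simp add: ginv_def rev_drop flip: drop_map)

lemma ginv_replicate: "ginv (replicate n l) = replicate n (inv_letter l)"
  by (induction n) (auto simp: replicate_append_same)

lemma prepend_red_cancel: "reduced z \<Longrightarrow> prepend_red (u @ ginv u) z = z"
proof (induction u arbitrary: z)
  case (Cons x u)
  then show ?case
    by (simp add: prepend_red_append reduced_cons_red cons_red_cancel)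
qed simp

lemma red_mid_cancel [simp]:
  "red (a @ u @ ginv u @ b) = red (a @ b)" "red (a @ ginv u @ u @ b) = red (a @ b)"
  using prepend_red_cancel[of _ u] prepend_red_cancel[of _ "ginv u"]
  by (simp_all add: red_append prepend_red_append)

lemma red_cancel [simp]:
  "red (u @ ginv u) = []" "red (ginv u @ u) = []"
  "red (u @ ginv u @ b) = red b" "red (ginv u @ u @ b) = red b"
  "red (a @ u @ ginv u) = red a" "red (a @ ginv u @ u) = red a"
  using red_mid_cancel[of "[]" _ "[]"] red_mid_cancel[of "[]"] red_mid_cancel[of _ _ "[]"]
  by simp_all

lemma reduced_ginv [simp]: "reduced (ginv u) \<longleftrightarrow> reduced u"
proof -
  have last_ginv: "u \<noteq> [] \<Longrightarrow> last (ginv u) = inv_letter (hd u)" for u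
    by (cases u) (auto simp: ginv_def)
  have "reduced (ginv u)" if "reduced u" for u
    using that
  proof (induction u)
    case (Cons x u)
    then show ?case
      by (cases "u = []") (auto simp: reduced_snoc reduced_Cons last_ginv)
  qed simp
  then show ?thesis by (metis ginv_ginv)
qed

lemma red_ginv: "red (ginv u) = ginv (red u)"
proof -
  have "red (ginv u) = red (ginv u @ red u @ ginv (red u))"
    by simp
  also have "\<dots> = red (ginv u @ u @ ginv (red u))"
    by (simp only: red_mid_red)
  also have "\<dots> = ginv (red u)" by (simp add: red_reduced)
  finally show ?thesis .
qed

lemma reduced_self_ginv: "reduced (p @ ginv p) \<Longrightarrow> p = []"
proof (cases p rule: rev_cases)
  case (snoc p' z)
  assume "reduced (p @ ginv p)"
  then have "reduced (p' @ [z, inv_letter z] @ ginv p')"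
    using snoc by simp
  then show ?thesis
    by (metis reduced_append reduced_two_iff)
qed simp

lemma reduced_ga [simp]: "reduced ga" and reduced_gb [simp]: "reduced gb"
  by (simp_all add: ga_def gb_def)

lemma F2_iff_reduced [simp]: "w \<in> F2 \<longleftrightarrow> reduced w"
  by (simp add: F2_def)

abbreviation wimg :: "letter list \<Rightarrow> letter list \<Rightarrow> letter list \<Rightarrow> letter list" where
  "wimg x y w \<equiv> concat (map (limg x y) w)"

lemma limg_inv_letter: "limg x y (inv_letter l) = ginv (limg x y l)"
  by (cases l; cases "fst l"; auto simp: inv_letter_def)

lemma reduced_limg: "reduced x \<Longrightarrow> reduced y \<Longrightarrow> reduced (limg x y l)"
  by (cases l; cases "fst l") auto

lemma wimg_ginv: "wimg x y (ginv w) = ginv (wimg x y w)"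
  by (induction w) (auto simp: limg_inv_letter)

lemma phi_red [simp]: "phi x y (red w) = phi x y w"
proof (induction w)
  case (Cons l w)
  have "red (wimg x y (cons_red l r)) = red (limg x y l @ wimg x y r)" for r
    by (cases r) (auto simp: limg_inv_letter)
  then have "phi x y (red (l # w)) = red (limg x y l @ wimg x y (red w))"
    by (simp add: phi_def red_Cons)
  also have "\<dots> = red (limg x y l @ wimg x y w)"
    using Cons by (metis phi_def red_append_red2)
  finally show ?case by (simp add: phi_def)
qed simp

lemma reduced_phi [simp]: "reduced (phi x y w)"
  by (simp add: phi_def)

lemma phi_append: "phi x y (u @ v) = red (phi x y u @ phi x y v)"
  by (simp add: phi_def)

lemma phi_Cons: "phi x y (l # w) = red (limg x y l @ phi x y w)"
  by (simp add: phi_def)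

lemma phi_ginv: "phi x y (ginv w) = ginv (phi x y w)"
  by (simp add: phi_def wimg_ginv red_ginv)

lemma phi_Nil [simp]: "phi x y [] = []"
  by (simp add: phi_def)

lemma phi_single [simp]: "phi x y [l] = red (limg x y l)"
  by (simp add: phi_def)

lemma phi_ga [simp]: "phi x y ga = red x" and phi_gb [simp]: "phi x y gb = red y"
  by (simp_all add: ga_def gb_def)

lemma red_concat_map_red: "red (concat (map (\<lambda>l. red (f l)) w)) = red (concat (map f w))"
  by (induction w) (simp_all, metis red_append_red1 red_append_red2)

lemma phi_phi: "phi x y (phi x' y' w) = phi (phi x y x') (phi x y y') w"
proof -
  have limg_phi: "red (wimg x y (limg x' y' l)) = limg (phi x y x') (phi x y y') l" for l
    by (cases l; cases "fst l") (auto simp: phi_ginv[unfolded phi_def] phi_def)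
  have wimg_concat: "wimg x y (concat ws) = concat (map (wimg x y) ws)" for ws
    by (induction ws) auto
  have "phi x y (phi x' y' w) = red (wimg x y (wimg x' y' w))"
    by (simp add: phi_def[of x' y'] phi_red) (simp add: phi_def)
  also have "\<dots> = red (concat (map (\<lambda>l. red (wimg x y (limg x' y' l))) w))"
    by (simp add: red_concat_map_red wimg_concat comp_def)
  finally show ?thesis by (simp add: limg_phi phi_def)
qed

lemma phi_comp: "phi x y \<circ> phi x' y' = phi (phi x y x') (phi x y y')"
  by (rule ext) (simp add: phi_phi)

lemma idA_apply: "idA w = red w"
proof -
  have "limg ga gb l = [l]" for l
    by (cases l; cases "fst l") (auto simp: ga_def gb_def inv_letter_def)
  then have "wimg ga gb w = w" by (induction w) simp_all
  then show ?thesis by (simp add: idA_def phi_def)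
qed

lemma idA_letters: "idA = phi [(GA, False)] [(GB, False)]"
  by (simp add: idA_def ga_def gb_def)

lemma phi_comp_idA [simp]: "phi x y \<circ> idA = phi x y"
  by (rule ext) (simp add: idA_apply)

lemma idA_comp_phi [simp]: "idA \<circ> phi x y = phi x y"
  by (rule ext) (simp add: idA_apply red_reduced)

lemma phi_eq_iff:
  "reduced x \<Longrightarrow> reduced y \<Longrightarrow> reduced x' \<Longrightarrow> reduced y' \<Longrightarrow> phi x y = phi x' y' \<longleftrightarrow> x = x' \<and> y = y'"
  by (metis phi_ga phi_gb red_reduced)

lemma lam_apply: "lam w u = red (ginv w @ u @ w)"
  by (simp add: lam_def gmult_def)

lemma lam_Nil [simp]: "lam [] u = red u"
  by (simp add: lam_apply)

lemma lam_ginv: "lam p (ginv w) = ginv (lam p w)"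
  by (simp add: lam_apply red_ginv[symmetric])

lemma lam_eq_phi: "lam w = phi (lam w ga) (lam w gb)"
proof
  fix u
  have conj_word: "red (concat (map (\<lambda>l. ginv w @ [l] @ w) u)) = red (ginv w @ u @ w)"
  proof (induction u)
    case (Cons l u)
    have "red (concat (map (\<lambda>l. ginv w @ [l] @ w) (l # u)))
        = red ((ginv w @ [l] @ w) @ red (concat (map (\<lambda>l. ginv w @ [l] @ w) u)))"
      by (simp only: red_append_red2) simp
    also have "\<dots> = red ((ginv w @ [l]) @ w @ ginv w @ (u @ w))"
      using Cons by (simp only: red_append_red2) simp
    also have "\<dots> = red (ginv w @ (l # u) @ w)" by (subst red_mid_cancel) simp
    finally show ?case .
  qed simp
  have "limg (lam w ga) (lam w gb) = (\<lambda>l. red (ginv w @ [l] @ w))"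
  proof
    fix l :: letter
    show "limg (lam w ga) (lam w gb) l = red (ginv w @ [l] @ w)"
      by (cases l; cases "fst l") (auto simp: lam_apply red_ginv[symmetric] ga_def gb_def inv_letter_def)
  qed
  then show "lam w u = phi (lam w ga) (lam w gb) u"
    unfolding phi_def by (simp only: red_concat_map_red lam_apply conj_word)
qed

lemma lam_letters: "lam w = phi (red (ginv w @ [(GA, False)] @ w)) (red (ginv w @ [(GB, False)] @ w))"
  using lam_eq_phi[of w] by (simp add: lam_apply ga_def gb_def)

lemma lam_comp: "lam p \<circ> lam q = lam (red (q @ p))"
  by (rule ext) (simp add: lam_apply red_ginv[symmetric])

lemma lam_Nil_eq_idA: "lam [] = idA"
  by (rule ext) (simp add: idA_apply)

lemma phi_comp_lam: "phi x y \<circ> lam w = lam (phi x y w) \<circ> phi x y"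
  by (rule ext) (simp add: lam_apply phi_append phi_ginv)

section \<open>Cancellation in products of reduced words\<close>

fun lcp :: "'a list \<Rightarrow> 'a list \<Rightarrow> nat" where
  "lcp (x # xs) (y # ys) = (if x = y then Suc (lcp xs ys) else 0)"
| "lcp _ _ = 0"

lemma lcp_le: "lcp xs ys \<le> length xs" "lcp xs ys \<le> length ys"
  by (induction xs ys rule: lcp.induct) auto

lemma take_lcp: "take (lcp xs ys) xs = take (lcp xs ys) ys"
  by (induction xs ys rule: lcp.induct) auto

lemma lcp_take: "lcp (take k xs) ys = min k (lcp xs ys)"
proof (induction xs ys arbitrary: k rule: lcp.induct)
  case (1 x xs y ys)
  then show ?case by (cases k) auto
qed auto

text \<open>\<open>canc u v\<close> is the number of letters cancelled at the junction of \<open>u @ v\<close>.\<close>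

definition canc :: "letter list \<Rightarrow> letter list \<Rightarrow> nat" where
  "canc u v = lcp (ginv u) v"

lemma canc_le: "canc u v \<le> length u" "canc u v \<le> length v"
  using lcp_le[of "ginv u" v] by (auto simp: canc_def)

lemma canc_drop: "canc (drop d u) v = min (length u - d) (canc u v)"
  by (simp add: canc_def ginv_drop lcp_take)

lemma canc_snoc:
  "canc (u @ [x]) v = (case v of [] \<Rightarrow> 0 | z # t \<Rightarrow> if z = inv_letter x then Suc (canc u t) else 0)"
  by (cases v) (auto simp: canc_def)

lemma take_canc: "take (canc u v) (ginv u) = take (canc u v) v"
  unfolding canc_def by (rule take_lcp)

lemma drop_canc: "drop (length u - canc u v) u = ginv (take (canc u v) v)"
  using take_canc[of u v] canc_le[of u v] by (metis ginv_drop ginv_ginv diff_diff_cancel)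

lemma red_append_canc: "reduced u \<Longrightarrow> reduced v \<Longrightarrow>
   red (u @ v) = take (length u - canc u v) u @ drop (canc u v) v"
proof (induction u arbitrary: v rule: rev_induct)
  case Nil
  then show ?case by (simp add: red_reduced canc_def)
next
  case (snoc x u)
  have ru: "reduced u" using snoc.prems(1) reduced_append by blast
  show ?case
  proof (cases "\<exists>t. v = inv_letter x # t")
    case True
    then obtain t where v: "v = inv_letter x # t" by blast
    have rt: "reduced t" using snoc.prems(2) v by (simp add: reduced_Cons)
    have "red ((u @ [x]) @ v) = red (u @ t)"
      using v rt by (simp add: red_append prepend_red_append red_reduced)
    then show ?thesis using v snoc.IH[OF ru rt] by (simp add: canc_snoc)
  next
    case False
    then have c0: "canc (u @ [x]) v = 0" by (cases v) (auto simp: canc_snoc)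
    have "reduced (u @ [x] @ v)"
      using False snoc.prems by (intro reduced_append_overlap) (auto simp: reduced_Cons neq_Nil_conv)
    then show ?thesis using c0 by (simp add: red_reduced)
  qed
qed

lemma length_red_append: "reduced u \<Longrightarrow> reduced v \<Longrightarrow>
   length (red (u @ v)) + 2 * canc u v = length u + length v"
  using red_append_canc[of u v] canc_le[of u v] by simp

lemma canc_self_lt: "reduced v \<Longrightarrow> v \<noteq> [] \<Longrightarrow> 2 * canc v v < length v"
proof (rule ccontr)
  assume r: "reduced v" and ne: "v \<noteq> []" and "\<not> 2 * canc v v < length v"
  then have k: "length v \<le> 2 * canc v v" by simp
  let ?k = "canc v v"
  have mirror: "inv_letter (v ! (length v - 1 - i)) = v ! i" if i: "i < ?k" for i
  proof -
    have "take ?k (ginv v) ! i = take ?k v ! i" using take_canc[of v v] by simp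
    moreover have "i < length v" using i canc_le[of v v] by simp
    ultimately show ?thesis using i by (simp add: ginv_def rev_nth)
  qed
  show False
  proof (cases "even (length v)")
    case True
    define i where "i = length v div 2 - 1"
    have "length v \<noteq> 0" using ne by simp
    then have l2: "length v \<ge> 2" using True by presburger
    have i1: "i < ?k" "Suc i < length v" "length v - 1 - i = Suc i"
      using l2 k True unfolding i_def by presburger+
    then have "v ! Suc i = inv_letter (v ! i)"
      using mirror[OF i1(1)] by (metis inv_letter_inv)
    then show False using r i1(2) by (simp add: reduced_def)
  next
    case False
    define i where "i = length v div 2"
    have "i < ?k" "length v - 1 - i = i" using False k unfolding i_def by presburger+
    then show False using mirror by force
  qed
qed

lemma red_append_drop:
  assumes "reduced (A @ drop d u)" "reduced u" "reduced v" and small: "d + canc u v < length u"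
  shows "\<exists>B. B \<noteq> [] \<and> red ((A @ drop d u) @ v) = (A @ B) @ drop (canc u v) v"
proof -
  define c where "c = canc u v"
  define B where "B = take (length u - d - c) (drop d u)"
  have split: "red (drop d u @ v) = B @ drop c v"
    using red_append_canc[OF reduced_drop[OF assms(2)] assms(3)] small canc_drop[of d u v]
    by (simp add: B_def c_def)
  have "B \<noteq> []" using small by (simp add: B_def c_def)
  moreover have "reduced (A @ B)"
    using reduced_take[OF assms(1), of "length A + length B"] by (simp add: B_def)
  moreover have "reduced (B @ drop c v)" using split by (metis reduced_red)
  ultimately have "red ((A @ drop d u) @ v) = (A @ B) @ drop c v"
    using split reduced_append_overlap[of A B "drop c v"]
    by (metis append.assoc red_append_red2 red_reduced)
  then show ?thesis using \<open>B \<noteq> []\<close> c_def by blast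
qed

section \<open>Endomorphisms that do not shorten words\<close>

definition small_cancellation :: "letter list \<Rightarrow> letter list \<Rightarrow> bool" where
  "small_cancellation x y \<longleftrightarrow> (\<forall>l m r. m \<noteq> inv_letter l \<longrightarrow> r \<noteq> inv_letter m \<longrightarrow>
     canc (limg x y l) (limg x y m) + canc (limg x y m) (limg x y r) < length (limg x y m))"

text \<open>Small cancellation leaves a nonempty middle part of every letter image uncancelled; \<open>A\<close>
  collects these parts for \<open>butlast s\<close>, and \<open>d\<close> letters of the last image are already cancelled.\<close>

lemma phi_small_cancellation_shape:
  assumes xy: "reduced x" "reduced y" and sc: "small_cancellation x y"
    and "reduced s" "s \<noteq> []"
  shows "\<exists>A d. phi x y s = A @ drop d (limg x y (last s)) \<and> length s \<le> length A + 1 \<and>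
     (\<forall>r. r \<noteq> inv_letter (last s) \<longrightarrow>
        d + canc (limg x y (last s)) (limg x y r) < length (limg x y (last s)))"
  using assms(4,5)
proof (induction s rule: rev_induct)
  case (snoc r s0)
  let ?X = "limg x y"
  have rX: "reduced (?X l)" for l using xy by (rule reduced_limg)
  have bound: "canc (?X l) (?X r) + canc (?X r) (?X r') < length (?X r)"
    if "r \<noteq> inv_letter l" "r' \<noteq> inv_letter r" for l r'
    using sc that unfolding small_cancellation_def by blast
  show ?case
  proof (cases "s0 = []")
    case True
    show ?thesis
    proof (intro exI conjI allI impI)
      show "phi x y (s0 @ [r]) = [] @ drop 0 (?X (last (s0 @ [r])))"
        using True by (simp add: red_reduced rX)
      fix r' assume "r' \<noteq> inv_letter (last (s0 @ [r]))"
      then show "0 + canc (?X (last (s0 @ [r]))) (?X r') < length (?X (last (s0 @ [r])))"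
        using bound[of r r'] True by simp
    qed (use True in simp)
  next
    case False
    let ?m = "last s0"
    have rm: "r \<noteq> inv_letter ?m" using snoc.prems False by (simp add: reduced_snoc)
    obtain A d where A: "phi x y s0 = A @ drop d (?X ?m)" and lA: "length s0 \<le> length A + 1"
      and d: "d + canc (?X ?m) (?X r) < length (?X ?m)"
      using snoc.IH False reduced_append[OF snoc.prems(1)] rm by blast
    obtain B where "B \<noteq> []" and B: "red ((A @ drop d (?X ?m)) @ ?X r) = (A @ B) @ drop (canc (?X ?m) (?X r)) (?X r)"
      using red_append_drop[OF _ rX rX d] A reduced_phi by metis
    have "phi x y (s0 @ [r]) = (A @ B) @ drop (canc (?X ?m) (?X r)) (?X r)"
      using A B by (simp add: phi_append)
    moreover have "length (s0 @ [r]) \<le> length (A @ B) + 1" using lA \<open>B \<noteq> []\<close> by (cases B) auto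
    moreover have "\<forall>r'. r' \<noteq> inv_letter r \<longrightarrow>
        canc (?X ?m) (?X r) + canc (?X r) (?X r') < length (?X r)"
      using bound[OF rm] by simp
    ultimately show ?thesis unfolding last_snoc by blast
  qed
qed simp

lemma length_le_phi_of_small_cancellation:
  assumes "reduced x" "reduced y" "small_cancellation x y" "reduced s"
  shows "length s \<le> length (phi x y s)"
proof (cases "s = []")
  case False
  then obtain A d where "phi x y s = A @ drop d (limg x y (last s))" "length s \<le> length A + 1"
    and "\<forall>r. r \<noteq> inv_letter (last s) \<longrightarrow>
        d + canc (limg x y (last s)) (limg x y r) < length (limg x y (last s))"
    using phi_small_cancellation_shape[OF assms False] by blast
  then have "d < length (limg x y (last s))" by (metis inv_letter_neq(1) add_lessD1)
  with \<open>phi x y s = _\<close> \<open>length s \<le> _\<close> show ?thesis by simp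
qed simp

section \<open>Nielsen moves\<close>

abbreviation "la \<equiv> (GA, False)"
abbreviation "lA \<equiv> (GA, True)"
abbreviation "lb \<equiv> (GB, False)"
abbreviation "lB \<equiv> (GB, True)"

lemma letter_cases: "l = la \<or> l = lA \<or> l = lb \<or> l = lB"
  by (cases l; cases "fst l"; auto)

lemma eq_of_same_gen: "fst l = fst m \<Longrightarrow> m \<noteq> inv_letter l \<Longrightarrow> m = l"
  by (cases l; cases m) (auto simp: inv_letter_def)

lemma eq_or_inv_of_other_gen:
  fixes l m r :: letter
  shows "fst l \<noteq> fst m \<Longrightarrow> fst r \<noteq> fst m \<Longrightarrow> r = l \<or> r = inv_letter l"
  using letter_cases[of l] letter_cases[of m] letter_cases[of r] by (auto simp: inv_letter_def)

lemma reduced_two_of_other_gens: "fst l \<noteq> fst m \<Longrightarrow> reduced [l, m]"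
  by (metis fst_inv_letter reduced_two_iff)

lemma length_limg_other_gens:
  "fst l \<noteq> fst m \<Longrightarrow> length (limg x y l) + length (limg x y m) = length x + length y"
  using letter_cases[of l] letter_cases[of m] by auto

text \<open>\<open>P1, \<dots>, P4\<close> enumerate \<open>PhiS\<close> in the order of its definition; \<open>Qi\<close> is the inverse of \<open>Pi\<close>.\<close>

definition "P1 = phi [la] [lb, la]"
definition "P2 = phi [la, lb] [lb]"
definition "P3 = phi [la] [la, lb]"
definition "P4 = phi [lb, la] [lb]"
definition "Q1 = phi [la] [lb, lA]"
definition "Q2 = phi [la, lB] [lb]"
definition "Q3 = phi [la] [lA, lb]"
definition "Q4 = phi [lB, la] [lb]"

lemmas move_defs = P1_def P2_def P3_def P4_def Q1_def Q2_def Q3_def Q4_def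

definition moves :: "(letter list \<Rightarrow> letter list) set" where
  "moves = {P1, P2, P3, P4, Q1, Q2, Q3, Q4}"

definition gen_img :: "letter \<Rightarrow> letter list \<Rightarrow> gen \<Rightarrow> letter list" where
  "gen_img l w g = (if g = fst l then (if snd l then ginv w else w) else [(g, False)])"

definition subst_letter :: "letter \<Rightarrow> letter list \<Rightarrow> letter list \<Rightarrow> letter list" where
  "subst_letter l w = phi (gen_img l w GA) (gen_img l w GB)"

lemma limg_gen_img:
  "limg (gen_img l w GA) (gen_img l w GB) z =
     (if fst z = fst l then (if z = l then w else ginv w) else [z])"
  by (cases z; cases l; cases "fst l"; cases "fst z"; auto simp: gen_img_def inv_letter_def)

lemma subst_letter_right_mult_moves: "fst l \<noteq> fst m \<Longrightarrow> subst_letter l [l, m] \<in> moves"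
  using letter_cases[of l] letter_cases[of m]
  by (auto simp: subst_letter_def moves_def gen_img_def inv_letter_def move_defs)

lemma subst_letter_left_mult_moves: "fst l \<noteq> fst m \<Longrightarrow> subst_letter l [m, l] \<in> moves"
  using letter_cases[of l] letter_cases[of m]
  by (auto simp: subst_letter_def moves_def gen_img_def inv_letter_def move_defs)

definition gens_length :: "(letter list \<Rightarrow> letter list) \<Rightarrow> nat" where
  "gens_length g = length (g ga) + length (g gb)"

lemma gens_length_subst_letter:
  assumes xy: "reduced x" "reduced y" and lm: "fst l \<noteq> fst m" and w: "reduced w"
  shows "gens_length (lam p \<circ> phi x y \<circ> subst_letter l w) =
     length (lam p (phi x y w)) + length (lam p (limg x y m))"
proof -
  let ?F = "\<lambda>w. lam p (phi x y w)"
  let ?x0 = "gen_img l w GA" and ?y0 = "gen_img l w GB"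
  have "gens_length (lam p \<circ> phi x y \<circ> subst_letter l w) = length (?F ?x0) + length (?F ?y0)"
    using w by (simp add: gens_length_def subst_letter_def red_reduced gen_img_def)
  also have "\<dots> = length (?F (limg ?x0 ?y0 l)) + length (?F (limg ?x0 ?y0 m))"
    using lm letter_cases[of l] letter_cases[of m] by (auto simp: phi_ginv lam_ginv)
  also have "\<dots> = length (lam p (phi x y w)) + length (lam p (limg x y m))"
    using lm by (simp add: limg_gen_img red_reduced reduced_limg xy)
  finally show ?thesis .
qed

section \<open>Nielsen reduction\<close>

definition shortenable :: "letter list \<Rightarrow> letter list \<Rightarrow> bool" where
  "shortenable x y \<longleftrightarrow>
     (\<exists>e\<in>moves. \<exists>p. reduced p \<and> gens_length (lam p \<circ> phi x y \<circ> e) < length x + length y)"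

lemma gens_ne_Nil_of_inj:
  assumes "reduced x" "reduced y" "inj_on (phi x y) F2"
  shows "x \<noteq> []" "y \<noteq> []"
proof -
  have "phi x y ga \<noteq> phi x y []" "phi x y gb \<noteq> phi x y []"
    using inj_onD[OF assms(3), of ga "[]"] inj_onD[OF assms(3), of gb "[]"]
    by (auto simp: ga_def gb_def)
  then show "x \<noteq> []" "y \<noteq> []" using assms(1,2) by (auto simp: red_reduced)
qed

lemma half_canc_of_not_shortenable:
  assumes xy: "reduced x" "reduced y" and ns: "\<not> shortenable x y" and lm: "fst l \<noteq> fst m"
  shows "2 * canc (limg x y l) (limg x y m) \<le> length (limg x y m)"
    and "2 * canc (limg x y l) (limg x y m) \<le> length (limg x y l)"
proof -
  let ?X = "limg x y"
  have no_shorter: "\<not> gens_length (lam [] \<circ> phi x y \<circ> e) < length (?X l) + length (?X m)"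
    if "e \<in> moves" for e
    using ns that length_limg_other_gens[OF lm, of x y] unfolding shortenable_def by auto
  have "gens_length (lam [] \<circ> phi x y \<circ> subst_letter l [l, m]) =
      length (red (?X l @ ?X m)) + length (?X m)"
    using gens_length_subst_letter[OF xy lm reduced_two_of_other_gens[OF lm], of "[]"]
    by (simp add: phi_Cons red_reduced reduced_limg xy)
  then have "length (?X l) \<le> length (red (?X l @ ?X m))"
    using no_shorter[OF subst_letter_right_mult_moves[OF lm]] by linarith
  moreover have "gens_length (lam [] \<circ> phi x y \<circ> subst_letter m [l, m]) =
      length (red (?X l @ ?X m)) + length (?X l)"
    using gens_length_subst_letter[OF xy _ reduced_two_of_other_gens[OF lm], of m l "[]"] lm
    by (simp add: phi_Cons red_reduced reduced_limg xy)
  then have "length (?X m) \<le> length (red (?X l @ ?X m))"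
    using no_shorter[OF subst_letter_left_mult_moves[of m l]] lm by force
  ultimately show "2 * canc (?X l) (?X m) \<le> length (?X m)" "2 * canc (?X l) (?X m) \<le> length (?X l)"
    using length_red_append[OF reduced_limg[OF xy] reduced_limg[OF xy], of l m] by simp_all
qed

lemma double_canc_bounds_of_not_shortenable:
  assumes xy: "reduced x" "reduced y" "x \<noteq> []" "y \<noteq> []" and ns: "\<not> shortenable x y"
    and ml: "m \<noteq> inv_letter l"
  shows "2 * canc (limg x y l) (limg x y m) \<le> length (limg x y m)"
    and "2 * canc (limg x y l) (limg x y m) \<le> length (limg x y l)"
    and "fst l = fst m \<Longrightarrow> 2 * canc (limg x y l) (limg x y m) < length (limg x y m)"
proof -
  have "limg x y m \<noteq> []" using xy by (cases m; cases "fst m") auto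
  then have self: "2 * canc (limg x y l) (limg x y m) < length (limg x y m)" "m = l"
    if "fst l = fst m"
    using canc_self_lt[OF reduced_limg[OF xy(1,2)]] eq_of_same_gen[OF that ml] by simp_all
  show "fst l = fst m \<Longrightarrow> 2 * canc (limg x y l) (limg x y m) < length (limg x y m)"
    by (rule self)
  show "2 * canc (limg x y l) (limg x y m) \<le> length (limg x y m)"
    using self half_canc_of_not_shortenable(1)[OF xy(1,2) ns] by (cases "fst l = fst m") auto
  show "2 * canc (limg x y l) (limg x y m) \<le> length (limg x y l)"
    using self half_canc_of_not_shortenable(2)[OF xy(1,2) ns] by (cases "fst l = fst m") auto
qed

text \<open>After the move \<open>l \<mapsto> m l\<close> and conjugation by \<open>p\<close>, the images of \<open>l\<close> and \<open>m\<close> reduce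
  to \<open>mid\<close> and \<open>q @ p\<close>.\<close>

lemma shortenable_of_conjugate_shape:
  assumes xy: "reduced x" "reduced y" and lm: "fst l \<noteq> fst m"
    and Xl: "limg x y l = ginv q @ mid @ ginv p" and Xm: "limg x y m = p @ q" and "p \<noteq> []"
  shows "shortenable x y"
proof -
  have rp: "reduced p" using reduced_limg[OF xy, of m] Xm reduced_append by metis
  have "gens_length (lam p \<circ> phi x y \<circ> subst_letter l [m, l]) =
      length (red mid) + length (red (q @ p))"
    using gens_length_subst_letter[OF xy lm, of "[m, l]" p] reduced_two_of_other_gens[of m l] lm
    by (simp add: phi_Cons lam_apply Xl Xm)
  also have "\<dots> < length x + length y"
    using length_red_le[of mid] length_red_le[of "q @ p"] length_limg_other_gens[OF lm, of x y] Xl Xm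
      \<open>p \<noteq> []\<close> by (simp del: length_greater_0_conv add: length_greater_0_conv[symmetric])
  finally show ?thesis
    unfolding shortenable_def using subst_letter_left_mult_moves[OF lm] rp by blast
qed

text \<open>If the letter \<open>m\<close> cancels exactly half of its image against both neighbours \<open>l\<close> and
  \<open>r\<close>, then \<open>r = l\<inverse>\<close> is impossible (the image of \<open>m\<close> would be \<open>p @ ginv p\<close>), and for \<open>r = l\<close>
  the images have the shape of \<open>shortenable_of_conjugate_shape\<close>.\<close>

lemma shortenable_of_balanced_triple:
  assumes xy: "reduced x" "reduced y" and lm: "fst l \<noteq> fst m" and rm: "fst r \<noteq> fst m"
    and k: "2 * canc (limg x y l) (limg x y m) = length (limg x y m)"
    and k': "canc (limg x y m) (limg x y r) = canc (limg x y l) (limg x y m)"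
    and lXl: "2 * canc (limg x y l) (limg x y m) \<le> length (limg x y l)"
    and ne: "limg x y m \<noteq> []"
  shows "shortenable x y"
proof -
  let ?X = "limg x y"
  define k where "k = canc (?X l) (?X m)"
  define p where "p = take k (?X m)"
  define q where "q = drop k (?X m)"
  have Xm: "?X m = p @ q" and lq: "length q = k" and lp: "length p = k"
    using k by (simp_all add: p_def q_def k_def)
  then have "p \<noteq> []" using k ne unfolding k_def by auto
  have tail_l: "drop (length (?X l) - k) (?X l) = ginv p"
    using drop_canc[of "?X l" "?X m"] by (simp add: k_def p_def)
  have head_r: "take k (?X r) = ginv q"
    using take_canc[of "?X m" "?X r"] k' Xm lq by (simp add: k_def)
  consider "r = inv_letter l" | "r = l" using eq_or_inv_of_other_gen[OF lm rm] by blast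
  then show ?thesis
  proof cases
    case 1
    then have "ginv q = ginv (drop (length (?X l) - k) (?X l))"
      using head_r lXl by (simp add: limg_inv_letter ginv_drop k_def)
    then have "q = ginv p" using tail_l by (metis ginv_ginv)
    then have "reduced (p @ ginv p)" using reduced_limg[OF xy, of m] Xm by simp
    then show ?thesis using reduced_self_ginv \<open>p \<noteq> []\<close> by blast
  next
    case 2
    define mid where "mid = drop k (take (length (?X l) - k) (?X l))"
    have "take k (take (length (?X l) - k) (?X l)) = take k (?X l)"
      using lXl by (simp add: min_absorb1 k_def)
    then have "?X l = take k (?X l) @ mid @ drop (length (?X l) - k) (?X l)"
      unfolding mid_def by (metis append.assoc append_take_drop_id)
    then have "?X l = ginv q @ mid @ ginv p" using head_r tail_l 2 by simp
    then show ?thesis using shortenable_of_conjugate_shape[OF xy lm _ Xm \<open>p \<noteq> []\<close>] by blast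
  qed
qed

lemma small_cancellation_of_not_shortenable:
  assumes xy: "reduced x" "reduced y" "x \<noteq> []" "y \<noteq> []" and ns: "\<not> shortenable x y"
  shows "small_cancellation x y"
proof (rule ccontr)
  let ?X = "limg x y"
  assume "\<not> small_cancellation x y"
  then obtain l m r where ml: "m \<noteq> inv_letter l" and rm: "r \<noteq> inv_letter m"
    and ge: "length (?X m) \<le> canc (?X l) (?X m) + canc (?X m) (?X r)"
    unfolding small_cancellation_def by auto
  note bounds = double_canc_bounds_of_not_shortenable[OF xy ns]
  have c1: "2 * canc (?X l) (?X m) \<le> length (?X m)" "fst l = fst m \<Longrightarrow> 2 * canc (?X l) (?X m) < length (?X m)"
    using bounds(1,3)[OF ml] by auto
  have c2: "2 * canc (?X m) (?X r) \<le> length (?X m)"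
    "fst r = fst m \<Longrightarrow> 2 * canc (?X m) (?X r) < length (?X m)"
    using bounds(2)[OF rm] bounds(3)[OF rm] eq_of_same_gen[OF _ rm] by auto
  have k: "2 * canc (?X l) (?X m) = length (?X m)" and k': "canc (?X m) (?X r) = canc (?X l) (?X m)"
    using c1(1) c2(1) ge by linarith+
  have "fst l \<noteq> fst m" and "fst r \<noteq> fst m"
    using c1(2) c2(2) k k' by auto
  moreover have "?X m \<noteq> []" using xy by (cases m; cases "fst m") auto
  ultimately show False
    using shortenable_of_balanced_triple[OF xy(1,2) _ _ k k' bounds(2)[OF ml]] ns by blast
qed

lemma length_two_of_small_cancellation:
  assumes xy: "reduced x" "reduced y" and sc: "small_cancellation x y"
    and onto: "ga \<in> phi x y ` F2" "gb \<in> phi x y ` F2"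
  shows "length x + length y = 2"
proof -
  let ?X = "limg x y"
  have letter_image: "\<exists>l. ?X l = [g]" if "[g] \<in> phi x y ` F2" for g
  proof -
    from that obtain s where s: "reduced s" "phi x y s = [g]" by force
    then have "length s \<le> 1" using length_le_phi_of_small_cancellation[OF xy sc] by fastforce
    moreover have "s \<noteq> []" using s by auto
    ultimately obtain l where "s = [l]" by (cases s) auto
    then have "?X l = [g]" using s by (simp add: red_reduced reduced_limg xy)
    then show ?thesis by blast
  qed
  obtain l l' where l: "?X l = ga" and l': "?X l' = gb"
    using letter_image[of la] letter_image[of lb] onto unfolding ga_def gb_def by blast
  have "fst l \<noteq> fst l'"
  proof
    assume "fst l = fst l'"
    then have "l' = l \<or> l' = inv_letter l" by (cases l; cases l') (auto simp: inv_letter_def)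
    moreover have "?X (inv_letter l) \<noteq> gb"
      by (simp only: limg_inv_letter l) (simp add: ga_def gb_def inv_letter_def)
    ultimately show False using l l' by (auto simp: ga_def gb_def)
  qed
  then show ?thesis using length_limg_other_gens[of l l' x y] l l' by (simp add: ga_def gb_def)
qed

theorem shortenable_of_bij:
  assumes xy: "reduced x" "reduced y" and bij: "bij_betw (phi x y) F2 F2"
    and long: "2 < length x + length y"
  shows "shortenable x y"
proof (rule ccontr)
  assume ns: "\<not> shortenable x y"
  have "x \<noteq> []" "y \<noteq> []"
    using gens_ne_Nil_of_inj[OF xy bij_betw_imp_inj_on[OF bij]] by blast+
  then have "small_cancellation x y" by (rule small_cancellation_of_not_shortenable[OF xy _ _ ns])
  then have "length x + length y = 2"
    using length_two_of_small_cancellation[OF xy] bij by (simp add: bij_betw_def)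
  then show False using long by simp
qed

lemmas word_defs = phi_def red_def inv_letter_def ga_def gb_def

lemma AutF2_phiE:
  assumes "f \<in> AutF2"
  obtains x y where "f = phi x y" "reduced x" "reduced y" "bij_betw (phi x y) F2 F2"
  using assms by (auto simp: AutF2_def)

lemma AutF2_eq_phi: "f \<in> AutF2 \<Longrightarrow> f = phi (f ga) (f gb)"
  by (auto simp: AutF2_def red_reduced)

lemma AutF2_reduced: "f \<in> AutF2 \<Longrightarrow> reduced (f w)"
  by (metis AutF2_phiE reduced_phi)

lemma AutF2_comp_idA [simp]: "f \<in> AutF2 \<Longrightarrow> f \<circ> idA = f"
  and idA_comp_AutF2 [simp]: "f \<in> AutF2 \<Longrightarrow> idA \<circ> f = f"
  by (metis AutF2_phiE phi_comp_idA idA_comp_phi)+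

lemma phi_in_AutF2I:
  assumes "reduced x" "reduced y" "reduced x'" "reduced y'"
    and inv: "phi x y \<circ> phi x' y' = idA" "phi x' y' \<circ> phi x y = idA"
  shows "phi x y \<in> AutF2"
proof -
  have "bij_betw (phi x y) F2 F2"
  proof (rule bij_betw_byWitness[where f' = "phi x' y'"])
    show "\<forall>a\<in>F2. phi x' y' (phi x y a) = a" "\<forall>a\<in>F2. phi x y (phi x' y' a) = a"
      using inv by (metis comp_apply idA_apply red_reduced F2_iff_reduced)+
  qed auto
  then show ?thesis using assms by (auto simp: AutF2_def)
qed

lemma AutF2_comp: "f \<in> AutF2 \<Longrightarrow> g \<in> AutF2 \<Longrightarrow> f \<circ> g \<in> AutF2"
proof -
  assume "f \<in> AutF2" "g \<in> AutF2"
  then obtain x y x' y' where f: "f = phi x y" "bij_betw (phi x y) F2 F2"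
    and g: "g = phi x' y'" "bij_betw (phi x' y') F2 F2"
    by (metis AutF2_phiE)
  then have "f \<circ> g = phi (phi x y x') (phi x y y')" by (simp add: phi_comp)
  moreover have "bij_betw (f \<circ> g) F2 F2" using f g by (auto intro: bij_betw_trans)
  ultimately show ?thesis unfolding AutF2_def
    by (intro CollectI exI[of _ "phi x y x'"] exI[of _ "phi x y y'"]) auto
qed

lemma idA_in_AutF2: "idA \<in> AutF2"
proof -
  have "phi [la] [lb] \<circ> phi [la] [lb] = idA" by (simp add: phi_comp idA_letters)
  then show ?thesis using phi_in_AutF2I[of "[la]" "[lb]" "[la]" "[lb]"] by (simp add: idA_letters)
qed

lemma lam_in_AutF2: "lam p \<in> AutF2"
proof -
  have "phi (lam p ga) (lam p gb) \<in> AutF2"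
  proof (rule phi_in_AutF2I[of _ _ "lam (ginv p) ga" "lam (ginv p) gb"])
    show "phi (lam p ga) (lam p gb) \<circ> phi (lam (ginv p) ga) (lam (ginv p) gb) = idA"
      "phi (lam (ginv p) ga) (lam (ginv p) gb) \<circ> phi (lam p ga) (lam p gb) = idA"
      by (simp_all flip: lam_eq_phi add: lam_comp lam_Nil_eq_idA)
  qed (auto simp: lam_apply)
  then show ?thesis by (simp flip: lam_eq_phi)
qed

lemma AutF2_comp_lam: "f \<in> AutF2 \<Longrightarrow> f \<circ> lam w = lam (f w) \<circ> f"
  by (metis AutF2_phiE phi_comp_lam)

lemma lam_comp_AutF2:
  assumes "f \<in> AutF2"
  obtains v where "lam w \<circ> f = f \<circ> lam v"
proof -
  obtain x y where f: "f = phi x y" "bij_betw (phi x y) F2 F2"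
    using assms(1) by (rule AutF2_phiE)
  then obtain v where "phi x y v = red w"
    unfolding bij_betw_def by (metis imageE reduced_red F2_iff_reduced)
  moreover have "lam (red w) = lam w" by (rule ext) (simp add: lam_apply red_ginv[symmetric])
  ultimately show ?thesis using that f phi_comp_lam[of x y v] by metis
qed

lemma moves_inverse: "P1 \<circ> Q1 = idA" "Q1 \<circ> P1 = idA" "P2 \<circ> Q2 = idA" "Q2 \<circ> P2 = idA"
  "P3 \<circ> Q3 = idA" "Q3 \<circ> P3 = idA" "P4 \<circ> Q4 = idA" "Q4 \<circ> P4 = idA"
  by (simp_all add: move_defs phi_comp idA_letters) (simp_all add: word_defs)

lemma moves_phi: "g \<in> moves \<Longrightarrow> g = phi (g ga) (g gb) \<and> reduced (g ga) \<and> reduced (g gb)"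
  by (auto simp: moves_def move_defs red_reduced reduced_Cons inv_letter_def)

lemma moves_has_inverse: "g \<in> moves \<Longrightarrow> \<exists>g'\<in>moves. g \<circ> g' = idA \<and> g' \<circ> g = idA"
  unfolding moves_def using moves_inverse by blast

lemma moves_AutF2: "g \<in> moves \<Longrightarrow> g \<in> AutF2"
proof -
  assume g: "g \<in> moves"
  then obtain g' where "g' \<in> moves" "g \<circ> g' = idA" "g' \<circ> g = idA"
    using moves_has_inverse by blast
  then show ?thesis using phi_in_AutF2I[of "g ga" "g gb" "g' ga" "g' gb"] moves_phi g by metis
qed

lemma phi_in_AutF2_of_order_four:
  assumes xy: "reduced x" "reduced y"
    and order: "phi x y \<circ> phi x y \<circ> phi x y \<circ> phi x y = idA"
  shows "phi x y \<in> AutF2"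
proof -
  define x3 where "x3 = phi x y (phi x y x)"
  define y3 where "y3 = phi x y (phi x y y)"
  have cube: "phi x y \<circ> phi x y \<circ> phi x y = phi x3 y3"
    by (simp add: phi_comp x3_def y3_def phi_phi red_reduced xy)
  show ?thesis
  proof (rule phi_in_AutF2I[OF xy])
    show "reduced x3" "reduced y3" by (simp_all add: x3_def y3_def)
    show "phi x y \<circ> phi x3 y3 = idA" "phi x3 y3 \<circ> phi x y = idA"
      using order cube by (metis comp_assoc)+
  qed
qed

lemma PsiS_eq: "PsiS = {phi [l1] [l2] | l1 l2. fst l1 \<noteq> fst l2}"
proof (intro equalityI subsetI)
  fix f assume f: "f \<in> PsiS"
  then have fa: "f \<in> AutF2" and l: "length (f ga) = 1" "length (f gb) = 1" by (auto simp: PsiS_def)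
  obtain l1 l2 where l1: "f ga = [l1]" and l2: "f gb = [l2]"
    using l by (metis length_0_conv length_Suc_conv One_nat_def)
  have ff: "f = phi [l1] [l2]" using AutF2_eq_phi[OF fa] l1 l2 by simp
  have inj: "inj_on f F2" using fa by (metis AutF2_phiE bij_betw_imp_inj_on)
  have "fst l1 \<noteq> fst l2"
  proof
    assume "fst l1 = fst l2"
    then consider "l2 = l1" | "l2 = inv_letter l1" by (metis eq_of_same_gen)
    then show False
    proof cases
      case 1
      then show False using inj_onD[OF inj, of ga gb] l1 l2 by (simp add: ga_def gb_def)
    next
      case 2
      then have "f [la, lb] = f []" using ff by (simp add: phi_def)
      then show False using inj_onD[OF inj, of "[la, lb]" "[]"] by (simp add: reduced_two_iff inv_letter_def)
    qed
  qed
  then show "f \<in> {phi [l1] [l2] | l1 l2. fst l1 \<noteq> fst l2}" using ff by blast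
next
  fix f assume "f \<in> {phi [l1] [l2] | l1 l2. fst l1 \<noteq> fst l2}"
  then obtain l1 l2 where f: "f = phi [l1] [l2]" and d: "fst l1 \<noteq> fst l2" by blast
  have "phi [l1] [l2] \<circ> phi [l1] [l2] \<circ> phi [l1] [l2] \<circ> phi [l1] [l2] = idA"
    using d letter_cases[of l1] letter_cases[of l2]
    by (auto simp: phi_comp idA_letters) (simp_all add: word_defs)
  then show "f \<in> PsiS"
    using phi_in_AutF2_of_order_four[of "[l1]" "[l2]"] f by (simp add: PsiS_def)
qed

lemma PsiS_letters: "fst l1 \<noteq> fst l2 \<Longrightarrow> phi [l1] [l2] \<in> PsiS"
  unfolding PsiS_eq by blast

lemma PsiS_AutF2: "f \<in> PsiS \<Longrightarrow> f \<in> AutF2"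
  by (simp add: PsiS_def)

lemma idA_in_PsiS: "idA \<in> PsiS"
  unfolding PsiS_eq idA_letters by auto

lemma PsiS_comp: "f \<in> PsiS \<Longrightarrow> g \<in> PsiS \<Longrightarrow> f \<circ> g \<in> PsiS"
proof -
  assume f: "f \<in> PsiS" and g: "g \<in> PsiS"
  obtain l1 l2 where "f = phi [l1] [l2]" using f unfolding PsiS_eq by blast
  then have "length (f [l]) = 1" for l by (cases l; cases "fst l") (auto simp: red_reduced)
  moreover obtain m1 m2 where "g ga = [m1]" "g gb = [m2]"
    using g unfolding PsiS_eq by (auto simp: red_reduced)
  ultimately show ?thesis using AutF2_comp[OF PsiS_AutF2[OF f] PsiS_AutF2[OF g]]
    by (simp add: PsiS_def)
qed

lemma moves_comp_PsiS:
  assumes g: "g \<in> moves" and psi: "psi \<in> PsiS"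
  obtains g' where "g' \<in> moves" "g \<circ> psi = psi \<circ> g'"
proof -
  have "\<forall>l1\<in>{la, lA, lb, lB}. \<forall>l2\<in>{la, lA, lb, lB}. fst l1 \<noteq> fst l2 \<longrightarrow>
    (\<forall>g\<in>moves. \<exists>g'\<in>moves. g \<circ> phi [l1] [l2] = phi [l1] [l2] \<circ> g')"
    unfolding moves_def move_defs
    by (simp add: phi_comp) (simp add: word_defs phi_eq_iff reduced_Cons)
  moreover obtain l1 l2 where "psi = phi [l1] [l2]" "fst l1 \<noteq> fst l2"
    using psi unfolding PsiS_eq by blast
  ultimately show ?thesis using that g letter_cases[of l1] letter_cases[of l2] by blast
qed

section \<open>Generation of \<open>AutF2\<close>\<close>

lemma mstar_AutF2:
  assumes "X \<subseteq> AutF2"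
  shows "m \<in> mstar X \<Longrightarrow> m \<in> AutF2"
  by (induction m rule: mstar.induct) (use assms idA_in_AutF2 AutF2_comp in blast)+

lemma mstar_snoc:
  assumes "X \<subseteq> AutF2" "m \<in> mstar X" "g \<in> X"
  shows "m \<circ> g \<in> mstar X"
  using assms(2)
proof (induction m rule: mstar.induct)
  case unit
  have "idA \<circ> g = g \<circ> idA" using assms(1,3) by auto
  then show ?case using mstar.step[OF assms(3) mstar.unit] by (simp only:)
next
  case (step f m)
  then show ?case by (metis comp_assoc mstar.step)
qed

lemma LambdaS_AutF2: "LambdaS \<subseteq> AutF2"
  by (auto simp: LambdaS_def lam_in_AutF2)

definition generators :: "(letter list \<Rightarrow> letter list) set" where
  "generators = PsiS \<union> moves \<union> LambdaS"

lemma generators_AutF2: "generators \<subseteq> AutF2"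
  using PsiS_AutF2 moves_AutF2 LambdaS_AutF2 by (auto simp: generators_def)

theorem AutF2_subset_mstar_generators: "AutF2 \<subseteq> mstar generators"
proof
  fix f assume "f \<in> AutF2"
  then show "f \<in> mstar generators"
  proof (induction "gens_length f" arbitrary: f rule: less_induct)
    case less
    obtain x y where f: "f = phi x y" "reduced x" "reduced y" "bij_betw (phi x y) F2 F2"
      using less.prems by (rule AutF2_phiE)
    have len: "gens_length f = length x + length y"
      using f by (simp add: gens_length_def red_reduced)
    show ?case
    proof (cases "length x + length y \<le> 2")
      case True
      have "x \<noteq> []" "y \<noteq> []" using gens_ne_Nil_of_inj f(2,3) bij_betw_imp_inj_on[OF f(4)] by auto
      then have "length x = 1" "length y = 1" using True by (cases x; cases y; auto)+
      then have "f \<in> generators" using less.prems f by (simp add: generators_def PsiS_def red_reduced)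
      then show ?thesis using mstar_snoc[OF generators_AutF2 mstar.unit] less.prems by fastforce
    next
      case False
      then obtain e p where e: "e \<in> moves" and p: "reduced p"
        and shorter: "gens_length (lam p \<circ> f \<circ> e) < gens_length f"
        using shortenable_of_bij[OF f(2-4)] f(1) len unfolding shortenable_def by auto
      obtain e' where e': "e' \<in> moves" "e \<circ> e' = idA" using moves_has_inverse[OF e] by blast
      have "lam p \<circ> f \<circ> e \<in> AutF2"
        using AutF2_comp[OF AutF2_comp[OF lam_in_AutF2 less.prems] moves_AutF2[OF e]] .
      then have "lam p \<circ> f \<circ> e \<circ> e' \<in> mstar generators"
        using less.hyps[OF shorter] mstar_snoc[OF generators_AutF2] e' by (simp add: generators_def)
      moreover have "lam (ginv p) \<in> generators" using p by (auto simp: generators_def LambdaS_def)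
      ultimately have "lam (ginv p) \<circ> (lam p \<circ> f \<circ> e \<circ> e') \<in> mstar generators"
        by (rule mstar.step[rotated])
      moreover have "lam (ginv p) \<circ> (lam p \<circ> f \<circ> e \<circ> e') = (lam (ginv p) \<circ> lam p) \<circ> f \<circ> (e \<circ> e')"
        by (simp add: comp_assoc)
      ultimately show ?thesis using e' less.prems by (simp add: lam_comp lam_Nil_eq_idA)
    qed
  qed
qed

lemma AutF2_eq_of_closed:
  assumes "idA \<in> T" "T \<subseteq> AutF2" and closed: "\<And>g f. g \<in> generators \<Longrightarrow> f \<in> T \<Longrightarrow> g \<circ> f \<in> T"
  shows "T = AutF2"
proof -
  have "f \<in> T" if "f \<in> mstar generators" for f
    using that by (induction f rule: mstar.induct) (simp_all add: assms(1) closed[unfolded comp_def])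
  then show ?thesis using AutF2_subset_mstar_generators assms(2) by blast
qed

definition apow :: "int \<Rightarrow> letter list" where
  "apow k = (if 0 \<le> k then replicate (nat k) la else replicate (nat (- k)) lA)"

lemma reduced_apow [simp]: "reduced (apow k)"
  by (simp add: apow_def reduced_replicate)

lemma ginv_apow: "ginv (apow k) = apow (- k)"
  by (auto simp: apow_def ginv_replicate inv_letter_def)

lemma gpow_ga: "gpow ga k = apow k"
proof -
  have "concat (replicate n [l]) = replicate n l" for n l
    by (induction n) auto
  then show ?thesis
    by (auto simp: gpow_def apow_def ga_def red_reduced reduced_replicate inv_letter_def)
qed

lemma red_apow_snoc_la: "red (apow m @ [la]) = apow (m + 1)"
proof (cases "0 \<le> m")
  case True
  then have "apow m @ [la] = apow (m + 1)"
    by (simp add: apow_def replicate_append_same nat_add_distrib flip: replicate_Suc)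
  then show ?thesis by (simp add: red_reduced)
next
  case False
  then obtain k where k: "nat (- m) = Suc k" by (cases "nat (- m)") auto
  then have "apow m @ [la] = replicate k lA @ [lA] @ ginv [lA]"
    using False by (simp add: apow_def replicate_append_same inv_letter_def)
  moreover have "apow (m + 1) = replicate k lA" using False k by (simp add: apow_def) arith
  ultimately show ?thesis by (metis red_cancel(5) red_reduced reduced_replicate)
qed

lemma red_la_Cons_apow: "red (la # apow n) = apow (n + 1)"
proof (cases "0 \<le> n")
  case True
  then have "la # apow n = apow (n + 1)"
    by (simp add: apow_def nat_add_distrib)
  then show ?thesis by (simp add: red_reduced)
next
  case False
  then obtain k where k: "nat (- n) = Suc k" by (cases "nat (- n)") auto
  then have "la # apow n = ginv [lA] @ [lA] @ replicate k lA"
    using False by (simp add: apow_def inv_letter_def)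
  moreover have "apow (n + 1) = replicate k lA" using False k by (simp add: apow_def) arith
  ultimately show ?thesis by (metis red_cancel(4) red_reduced reduced_replicate)
qed

lemma red_apow_snoc_lA: "red (apow m @ [lA]) = apow (m - 1)"
  using arg_cong[OF red_la_Cons_apow[of "- m"], of ginv]
  by (simp add: red_ginv[symmetric] ginv_apow inv_letter_def)

lemma red_lA_Cons_apow: "red (lA # apow n) = apow (n - 1)"
  using arg_cong[OF red_apow_snoc_la[of "- n"], of ginv]
  by (simp add: red_ginv[symmetric] ginv_apow inv_letter_def)

lemma phi_la_apow: "phi [la] y (apow k) = apow k"
proof -
  have "concat (replicate n [l]) = replicate n l" for n l
    by (induction n) auto
  then show ?thesis
    by (auto simp: phi_def apow_def inv_letter_def red_reduced reduced_replicate)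
qed

lemma phi_apow_indep: "phi x y (apow k) = phi x y' (apow k)"
  by (simp add: phi_def apow_def inv_letter_def)

lemma reduced_apow_b_apow: "fst c = GB \<Longrightarrow> reduced (apow m @ c # apow n)"
proof -
  assume c: "fst c = GB"
  have a_letters: "fst l = GA" if "l \<in> set (apow k)" for l k
    using that by (auto simp: apow_def split: if_splits)
  have "reduced (apow m @ [c])"
    using a_letters[OF last_in_set, of m] c by (auto simp: reduced_snoc inv_letter_def)
  moreover have "reduced ([c] @ apow n)"
    using a_letters[OF hd_in_set, of n] c by (auto simp: reduced_Cons inv_letter_def)
  ultimately show ?thesis using reduced_append_overlap[of "apow m" "[c]" "apow n"] by simp
qed

definition delta :: "int \<Rightarrow> int \<Rightarrow> letter \<Rightarrow> letter list \<Rightarrow> letter list" where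
  "delta m n c = phi [la] (apow m @ [c] @ apow n)"

lemma DeltaS_eq: "DeltaS = {delta m n c | m n c. c = lb \<or> c = lB}"
proof -
  have gpow_gb: "gpow gb 1 = [lb]" "gpow gb (-1) = [lB]"
    by (simp_all add: gpow_def gb_def inv_letter_def)
  have gen: "phi ga (gmult (gmult (gpow ga m) (gpow gb e)) (gpow ga n)) = delta m n c"
    if "(e = 1 \<and> c = lb) \<or> (e = -1 \<and> c = lB)" for m n c and e :: int
    using that reduced_apow_b_apow[of c m n]
    by (auto simp: delta_def gmult_def gpow_ga[unfolded ga_def] gpow_gb ga_def red_reduced)
  show ?thesis
  proof (intro equalityI subsetI)
    fix f assume "f \<in> DeltaS"
    then obtain m n and e :: int where "e = 1 \<or> e = -1"
      and "f = phi ga (gmult (gmult (gpow ga m) (gpow gb e)) (gpow ga n))"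
      unfolding DeltaS_def by blast
    then show "f \<in> {delta m n c | m n c. c = lb \<or> c = lB}"
      using gen[of e lb m n] gen[of e lB m n] by blast
  next
    fix f assume "f \<in> {delta m n c | m n c. c = lb \<or> c = lB}"
    then obtain m n c where c: "c = lb \<or> c = lB" and f: "f = delta m n c" by blast
    define e :: int where "e = (if c = lb then 1 else -1)"
    have "f = phi ga (gmult (gmult (gpow ga m) (gpow gb e)) (gpow ga n))"
      using gen[of e c m n] c f by (auto simp: e_def)
    then show "f \<in> DeltaS" unfolding DeltaS_def e_def by auto
  qed
qed

lemma delta_in_DeltaS: "c = lb \<or> c = lB \<Longrightarrow> delta m n c \<in> DeltaS"
  unfolding DeltaS_eq by blast

lemma phi_comp_delta:
  "reduced x \<Longrightarrow> phi x y \<circ> delta m n c = phi x (red (phi x y (apow m) @ limg x y c @ phi x y (apow n)))"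
  by (simp add: delta_def phi_comp red_reduced phi_append phi_Cons)

lemma red_apow_cancel:
  "red (apow (- k) @ apow k @ b) = red b" "red (apow k @ apow (- k) @ b) = red b"
  "red (x # apow k @ apow (- k)) = [x]" "red (x # apow (- k) @ apow k) = [x]"
  using red_cancel(3,4)[of "apow k" b] red_cancel(5,6)[of "[x]" "apow k"]
  by (simp_all add: ginv_apow)

lemma delta_inverse:
  "delta m n lb \<circ> delta (- m) (- n) lb = idA" "delta m n lB \<circ> delta n m lB = idA"
  by (simp_all add: delta_def[of m n] phi_comp_delta red_reduced reduced_apow_b_apow phi_la_apow
      ginv_apow inv_letter_def idA_letters red_apow_cancel)

lemma delta_AutF2: "c = lb \<or> c = lB \<Longrightarrow> delta m n c \<in> AutF2"
proof -
  have inv: "delta m n lb \<circ> delta (- m) (- n) lb = idA" "delta (- m) (- n) lb \<circ> delta m n lb = idA"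
    "delta m n lB \<circ> delta n m lB = idA" "delta n m lB \<circ> delta m n lB = idA"
    using delta_inverse[of m n] delta_inverse[of "- m" "- n"] delta_inverse[of n m] by simp_all
  assume "c = lb \<or> c = lB"
  then show ?thesis
    using phi_in_AutF2I[OF _ _ _ _ inv(1,2)[unfolded delta_def]]
      phi_in_AutF2I[OF _ _ _ _ inv(3,4)[unfolded delta_def]]
    by (auto simp: delta_def reduced_apow_b_apow)
qed

lemma DeltaS_AutF2: "DeltaS \<subseteq> AutF2"
  unfolding DeltaS_eq using delta_AutF2 by blast

section \<open>The decomposition \<open>AutF2 = LambdaS PsiS PhiS* DeltaS\<close>\<close>

lemma PhiS_eq: "PhiS = {P1, P2, P3, P4}"
  by (simp add: PhiS_def move_defs gmult_def ga_def gb_def red_reduced reduced_Cons inv_letter_def)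

lemma PhiS_AutF2: "PhiS \<subseteq> AutF2"
  using moves_AutF2 by (auto simp: PhiS_eq moves_def)

lemma setprod_memI: "f \<in> X \<Longrightarrow> g \<in> Y \<Longrightarrow> f \<circ> g \<in> X \<cdot>\<cdot> Y"
  by (auto simp: setprod_def)

definition first_form :: "(letter list \<Rightarrow> letter list) \<Rightarrow> bool" where
  "first_form f \<longleftrightarrow> (\<exists>w psi ph d. reduced w \<and> psi \<in> PsiS \<and> ph \<in> mstar PhiS \<and> d \<in> DeltaS \<and>
      f = lam w \<circ> psi \<circ> ph \<circ> d)"

lemma first_formI:
  "reduced w \<Longrightarrow> psi \<in> PsiS \<Longrightarrow> ph \<in> mstar PhiS \<Longrightarrow> d \<in> DeltaS \<Longrightarrow> f = lam w \<circ> psi \<circ> ph \<circ> d \<Longrightarrow>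
    first_form f"
  unfolding first_form_def by blast

lemma first_form_set: "LambdaS \<cdot>\<cdot> PsiS \<cdot>\<cdot> mstar PhiS \<cdot>\<cdot> DeltaS = {f. first_form f}"
proof (intro equalityI subsetI)
  fix f assume "f \<in> LambdaS \<cdot>\<cdot> PsiS \<cdot>\<cdot> mstar PhiS \<cdot>\<cdot> DeltaS"
  then obtain w psi ph d where "reduced w" "psi \<in> PsiS" "ph \<in> mstar PhiS" "d \<in> DeltaS"
    "f = lam w \<circ> psi \<circ> ph \<circ> d"
    unfolding setprod_def LambdaS_def by auto
  then show "f \<in> {f. first_form f}" by (auto intro: first_formI)
next
  fix f assume "f \<in> {f. first_form f}"
  then obtain w psi ph d where "reduced w" "psi \<in> PsiS" "ph \<in> mstar PhiS" "d \<in> DeltaS"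
    "f = lam w \<circ> psi \<circ> ph \<circ> d"
    unfolding first_form_def by auto
  then show "f \<in> LambdaS \<cdot>\<cdot> PsiS \<cdot>\<cdot> mstar PhiS \<cdot>\<cdot> DeltaS"
    by (auto intro!: setprod_memI simp: LambdaS_def)
qed

lemma first_formE:
  assumes "first_form f"
  obtains w psi ph d where "reduced w" "psi \<in> PsiS" "ph \<in> mstar PhiS" "d \<in> DeltaS"
    "f = lam w \<circ> psi \<circ> ph \<circ> d"
  using assms unfolding first_form_def by blast

lemma first_form_AutF2: "first_form f \<Longrightarrow> f \<in> AutF2"
proof (elim first_formE)
  fix w psi ph d assume "psi \<in> PsiS" "ph \<in> mstar PhiS" "d \<in> DeltaS" "f = lam w \<circ> psi \<circ> ph \<circ> d"
  then show "f \<in> AutF2"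
    using mstar_AutF2[OF PhiS_AutF2] DeltaS_AutF2
    by (simp add: AutF2_comp lam_in_AutF2 PsiS_AutF2 subset_iff)
qed

lemma first_form_idA: "first_form idA"
proof -
  have "delta 0 0 lb = idA" by (simp add: delta_def apow_def idA_letters)
  then show ?thesis
    using delta_in_DeltaS[of lb 0 0]
    by (intro first_formI[of "[]" idA idA idA]) (auto simp: idA_in_PsiS mstar.unit lam_Nil_eq_idA idA_in_AutF2)
qed

lemma first_form_lam_comp: "first_form f \<Longrightarrow> first_form (lam v \<circ> f)"
proof (elim first_formE)
  fix w psi ph d assume "psi \<in> PsiS" "ph \<in> mstar PhiS" "d \<in> DeltaS"
    and f: "f = lam w \<circ> psi \<circ> ph \<circ> d"
  have "lam v \<circ> f = (lam v \<circ> lam w) \<circ> psi \<circ> ph \<circ> d" by (simp only: f comp_assoc)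
  also have "\<dots> = lam (red (w @ v)) \<circ> psi \<circ> ph \<circ> d" by (simp only: lam_comp)
  finally show "first_form (lam v \<circ> f)"
    using \<open>psi \<in> _\<close> \<open>ph \<in> _\<close> \<open>d \<in> _\<close> by (intro first_formI) auto
qed

lemma first_form_PsiS_comp: "psi' \<in> PsiS \<Longrightarrow> first_form f \<Longrightarrow> first_form (psi' \<circ> f)"
proof (elim first_formE)
  fix w psi ph d assume psi': "psi' \<in> PsiS" and "psi \<in> PsiS" "ph \<in> mstar PhiS" "d \<in> DeltaS"
    and f: "f = lam w \<circ> psi \<circ> ph \<circ> d"
  have "psi' \<circ> f = (psi' \<circ> lam w) \<circ> psi \<circ> ph \<circ> d" by (simp only: f comp_assoc)
  also have "\<dots> = lam (psi' w) \<circ> (psi' \<circ> psi) \<circ> ph \<circ> d"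
    using AutF2_comp_lam[OF PsiS_AutF2[OF psi'], of w] by (simp only: comp_assoc)
  finally show "first_form (psi' \<circ> f)"
    using psi' \<open>psi \<in> _\<close> \<open>ph \<in> _\<close> \<open>d \<in> _\<close>
    by (intro first_formI) (auto simp: PsiS_comp AutF2_reduced PsiS_AutF2)
qed

lemma inverse_move_comp_PhiS_table:
  "Q1 \<circ> P1 = lam [] \<circ> idA \<circ> idA" "Q1 \<circ> P2 = lam [lA] \<circ> phi [lb] [lA] \<circ> P1"
  "Q1 \<circ> P3 = lam [lA] \<circ> idA \<circ> idA" "Q1 \<circ> P4 = lam [lB] \<circ> phi [lb] [lA] \<circ> P1"
  "Q2 \<circ> P1 = lam [lB] \<circ> phi [lB] [la] \<circ> P2" "Q2 \<circ> P2 = lam [] \<circ> idA \<circ> idA"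
  "Q2 \<circ> P3 = lam [lA] \<circ> phi [lB] [la] \<circ> P2" "Q2 \<circ> P4 = lam [lB] \<circ> idA \<circ> idA"
  "Q3 \<circ> P1 = lam [la] \<circ> idA \<circ> idA" "Q3 \<circ> P2 = lam [] \<circ> phi [lb] [lA] \<circ> P1"
  "Q3 \<circ> P3 = lam [] \<circ> idA \<circ> idA" "Q3 \<circ> P4 = lam [lB, la] \<circ> phi [lb] [lA] \<circ> P1"
  "Q4 \<circ> P1 = lam [] \<circ> phi [lB] [la] \<circ> P2" "Q4 \<circ> P2 = lam [lb] \<circ> idA \<circ> idA"
  "Q4 \<circ> P3 = lam [lA, lb] \<circ> phi [lB] [la] \<circ> P2" "Q4 \<circ> P4 = lam [] \<circ> idA \<circ> idA"
  unfolding move_defs lam_letters idA_letters phi_comp by (simp_all add: word_defs)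

lemma inverse_move_comp_PhiS:
  assumes "q \<in> {Q1, Q2, Q3, Q4}" "P \<in> PhiS"
  obtains w psi ph where "reduced w" "psi \<in> PsiS" "ph \<in> insert idA PhiS" "q \<circ> P = lam w \<circ> psi \<circ> ph"
proof -
  have "phi [lb] [lA] \<in> PsiS" "phi [lB] [la] \<in> PsiS" "idA \<in> PsiS" "idA \<in> insert idA PhiS"
    "P1 \<in> insert idA PhiS" "P2 \<in> insert idA PhiS"
    by (simp_all add: PsiS_letters idA_in_PsiS PhiS_eq)
  moreover have "reduced [lB, la]" "reduced [lA, lb]" by (simp_all add: reduced_two_iff inv_letter_def)
  ultimately show ?thesis
    using assms that unfolding PhiS_eq
    by (auto simp: inverse_move_comp_PhiS_table) (metis reduced_Nil reduced_single)+
qed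

lemma red_apow_b_apow: "fst c = GB \<Longrightarrow> red (apow m @ c # apow n) = apow m @ c # apow n"
  using reduced_apow_b_apow[of c m n] by (simp add: red_reduced)

text \<open>\<open>Q1\<close> and \<open>Q3\<close> only shift the exponents of a delta; \<open>Q2\<close> and \<open>Q4\<close> do so after inverting
  the middle letter, which the letter permutation \<open>b \<mapsto> b\<inverse>\<close> undoes.\<close>

lemma Q1_comp_delta: "Q1 \<circ> delta m n lb = delta m (n - 1) lb" "Q1 \<circ> delta m n lB = delta (m + 1) n lB"
proof -
  have "red (apow m @ lb # lA # apow n) = apow m @ lb # apow (n - 1)"
    by (metis red_tail_red(2) red_lA_Cons_apow red_apow_b_apow fst_conv)
  then show "Q1 \<circ> delta m n lb = delta m (n - 1) lb"
    by (simp add: Q1_def phi_comp_delta phi_la_apow inv_letter_def) (simp add: delta_def)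
  have "red (apow m @ la # lB # apow n) = apow (m + 1) @ lB # apow n"
    by (metis append.assoc append_Cons append_Nil red_append_red1 red_apow_snoc_la red_apow_b_apow fst_conv)
  then show "Q1 \<circ> delta m n lB = delta (m + 1) n lB"
    by (simp add: Q1_def phi_comp_delta phi_la_apow inv_letter_def) (simp add: delta_def)
qed

lemma Q3_comp_delta: "Q3 \<circ> delta m n lb = delta (m - 1) n lb" "Q3 \<circ> delta m n lB = delta m (n + 1) lB"
proof -
  have "red (apow m @ lA # lb # apow n) = apow (m - 1) @ lb # apow n"
    by (metis append.assoc append_Cons append_Nil red_append_red1 red_apow_snoc_lA red_apow_b_apow fst_conv)
  then show "Q3 \<circ> delta m n lb = delta (m - 1) n lb"
    by (simp add: Q3_def phi_comp_delta phi_la_apow inv_letter_def) (simp add: delta_def)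
  have "red (apow m @ lB # la # apow n) = apow m @ lB # apow (n + 1)"
    by (metis red_tail_red(2) red_la_Cons_apow red_apow_b_apow fst_conv)
  then show "Q3 \<circ> delta m n lB = delta m (n + 1) lB"
    by (simp add: Q3_def phi_comp_delta phi_la_apow inv_letter_def) (simp add: delta_def)
qed

lemma phi_comp_delta_flip: "reduced x \<Longrightarrow> c = lb \<or> c = lB \<Longrightarrow>
    phi x y \<circ> delta m n c = phi x (ginv y) \<circ> delta m n (inv_letter c)"
  by (auto simp: phi_comp_delta phi_apow_indep[of x y _ "ginv y"] inv_letter_def)

lemma Q2_comp_delta: "c = lb \<or> c = lB \<Longrightarrow> Q2 \<circ> delta m n c = phi [la] [lB] \<circ> P2 \<circ> delta m n (inv_letter c)"
proof -
  have "phi [la, lB] [lB] = phi [la] [lB] \<circ> P2" by (simp add: P2_def phi_comp word_defs)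
  moreover assume "c = lb \<or> c = lB"
  ultimately show ?thesis
    unfolding Q2_def by (subst phi_comp_delta_flip) (auto simp: reduced_Cons inv_letter_def)
qed

lemma Q4_comp_delta: "c = lb \<or> c = lB \<Longrightarrow> Q4 \<circ> delta m n c = phi [la] [lB] \<circ> P4 \<circ> delta m n (inv_letter c)"
proof -
  have "phi [lB, la] [lB] = phi [la] [lB] \<circ> P4" by (simp add: P4_def phi_comp word_defs)
  moreover assume "c = lb \<or> c = lB"
  ultimately show ?thesis
    unfolding Q4_def by (subst phi_comp_delta_flip) (auto simp: reduced_Cons inv_letter_def)
qed

lemma inverse_move_comp_DeltaS:
  assumes q: "q \<in> {Q1, Q2, Q3, Q4}" and d: "d \<in> DeltaS"
  obtains psi P d' where "psi \<in> PsiS" "P \<in> insert idA PhiS" "d' \<in> DeltaS" "q \<circ> d = psi \<circ> P \<circ> d'"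
proof -
  obtain m n c where c: "c = lb \<or> c = lB" and dd: "d = delta m n c"
    using d unfolding DeltaS_eq by blast
  have ic: "inv_letter c = lb \<or> inv_letter c = lB" using c by (auto simp: inv_letter_def)
  have shifted: "q \<circ> d \<in> DeltaS" if "q = Q1 \<or> q = Q3"
    using that c by (auto simp: dd Q1_comp_delta Q3_comp_delta intro: delta_in_DeltaS)
  have psi: "phi [la] [lB] \<in> PsiS" by (simp add: PsiS_letters)
  consider "q = Q1 \<or> q = Q3" | "q = Q2" | "q = Q4" using q by blast
  then show ?thesis
  proof cases
    case 1
    have "q \<circ> d \<in> AutF2" using DeltaS_AutF2 shifted[OF 1] by blast
    then have "q \<circ> d = idA \<circ> idA \<circ> (q \<circ> d)" by (simp add: idA_in_AutF2)
    then show ?thesis using that[OF idA_in_PsiS _ shifted[OF 1]] by blast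
  next
    case 2
    then show ?thesis
      using that[OF psi _ delta_in_DeltaS[OF ic, of m n], of P2] Q2_comp_delta[OF c, of m n] dd
      by (simp add: PhiS_eq)
  next
    case 3
    then show ?thesis
      using that[OF psi _ delta_in_DeltaS[OF ic, of m n], of P4] Q4_comp_delta[OF c, of m n] dd
      by (simp add: PhiS_eq)
  qed
qed

lemma mstar_Cons_insert_idA:
  assumes "X \<subseteq> AutF2" "P \<in> insert idA X" "ph \<in> mstar X"
  shows "P \<circ> ph \<in> mstar X"
  using assms mstar_AutF2[OF assms(1,3)] by (auto intro: mstar.step)

lemma first_form_move_comp:
  assumes g: "g \<in> moves" and ph: "ph \<in> mstar PhiS" and d: "d \<in> DeltaS"
  shows "first_form (g \<circ> ph \<circ> d)"
proof (cases "g \<in> PhiS")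
  case True
  have "g \<circ> ph \<in> mstar PhiS" using mstar.step[OF True ph] .
  moreover have "g \<circ> ph \<in> AutF2" using mstar_AutF2[OF PhiS_AutF2] calculation by blast
  ultimately show ?thesis
    using d by (intro first_formI[of "[]" idA "g \<circ> ph" d])
      (auto simp: idA_in_PsiS lam_Nil_eq_idA idA_in_AutF2)
next
  case False
  then have q: "g \<in> {Q1, Q2, Q3, Q4}" using g by (auto simp: moves_def PhiS_eq)
  show ?thesis
    using ph
  proof cases
    case unit
    obtain psi P d' where psi: "psi \<in> PsiS" and P: "P \<in> insert idA PhiS" and d': "d' \<in> DeltaS"
      and gd: "g \<circ> d = psi \<circ> P \<circ> d'"
      using inverse_move_comp_DeltaS[OF q d] by blast
    have "g \<circ> ph \<circ> d = lam [] \<circ> psi \<circ> (P \<circ> idA) \<circ> d'"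
      using unit gd moves_AutF2[OF g] DeltaS_AutF2 d' PsiS_AutF2[OF psi]
      by (auto simp: lam_Nil_eq_idA comp_assoc)
    then show ?thesis
      using mstar_Cons_insert_idA[OF PhiS_AutF2 P mstar.unit] psi d' by (intro first_formI) auto
  next
    case (step P ph')
    obtain w psi P' where "reduced w" "psi \<in> PsiS" "P' \<in> insert idA PhiS" "g \<circ> P = lam w \<circ> psi \<circ> P'"
      using inverse_move_comp_PhiS[OF q step(2)] by blast
    moreover have "g \<circ> ph \<circ> d = (g \<circ> P) \<circ> ph' \<circ> d" using step by (simp add: comp_assoc)
    ultimately show ?thesis
      using mstar_Cons_insert_idA[OF PhiS_AutF2 _ step(3)] d
      by (intro first_formI[of w psi "P' \<circ> ph'" d]) (auto simp: comp_assoc)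
  qed
qed

lemma first_form_moves_comp:
  assumes g: "g \<in> moves" and f: "first_form f"
  shows "first_form (g \<circ> f)"
proof -
  obtain w psi ph d where "reduced w" and psi: "psi \<in> PsiS" and ph: "ph \<in> mstar PhiS"
    and d: "d \<in> DeltaS" and f_eq: "f = lam w \<circ> psi \<circ> ph \<circ> d"
    using f by (rule first_formE)
  obtain g' where g': "g' \<in> moves" "g \<circ> psi = psi \<circ> g'"
    using moves_comp_PsiS[OF g psi] by blast
  have "g \<circ> f = (g \<circ> lam w) \<circ> psi \<circ> ph \<circ> d" by (simp only: f_eq comp_assoc)
  also have "\<dots> = lam (g w) \<circ> (g \<circ> psi) \<circ> ph \<circ> d"
    by (simp only: AutF2_comp_lam[OF moves_AutF2[OF g]] comp_assoc)
  also have "\<dots> = lam (g w) \<circ> (psi \<circ> (g' \<circ> ph \<circ> d))" by (simp only: g'(2) comp_assoc)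
  finally show ?thesis
    using first_form_lam_comp first_form_PsiS_comp[OF psi first_form_move_comp[OF g'(1) ph d]]
    by simp
qed

theorem AutF2_eq_first_form: "AutF2 = LambdaS \<cdot>\<cdot> PsiS \<cdot>\<cdot> mstar PhiS \<cdot>\<cdot> DeltaS"
proof -
  have "{f. first_form f} = AutF2"
  proof (rule AutF2_eq_of_closed)
    fix g f assume "g \<in> generators" "f \<in> {f. first_form f}"
    then show "g \<circ> f \<in> {f. first_form f}"
      using first_form_lam_comp first_form_PsiS_comp first_form_moves_comp
      by (auto simp: generators_def LambdaS_def)
  qed (use first_form_idA first_form_AutF2 in auto)
  then show ?thesis by (simp add: first_form_set)
qed

section \<open>The decomposition \<open>AutF2 = PsiS (Sigma0\<inverse>)* LambdaS phi_{a,ba}* {tau1, tau2}\<close>\<close>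

definition "tau1 = phi [lA] [lb]"
definition "tau2 = phi [lA] [lB]"

text \<open>The middle factor is taken in \<open>{Q1, Q4}*\<close> rather than in \<open>(setinv Sigma0)* = {Q1, swap_inv}*\<close>
  (see \<open>mstar_Q1_Q4_subset\<close>), so that no letter permutation occurs between \<open>PsiS\<close> and \<open>LambdaS\<close>.\<close>

definition second_form :: "(letter list \<Rightarrow> letter list) \<Rightarrow> bool" where
  "second_form f \<longleftrightarrow> (\<exists>psi s w p t. psi \<in> PsiS \<and> s \<in> mstar {Q1, Q4} \<and> reduced w \<and>
      p \<in> mstar {P1} \<and> t \<in> {tau1, tau2} \<and> f = psi \<circ> s \<circ> lam w \<circ> p \<circ> t)"

lemma second_formI:
  "psi \<in> PsiS \<Longrightarrow> s \<in> mstar {Q1, Q4} \<Longrightarrow> reduced w \<Longrightarrow> p \<in> mstar {P1} \<Longrightarrow> t \<in> {tau1, tau2} \<Longrightarrow>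
    f = psi \<circ> s \<circ> lam w \<circ> p \<circ> t \<Longrightarrow> second_form f"
  unfolding second_form_def by blast

lemma second_formE:
  assumes "second_form f"
  obtains psi s w p t where "psi \<in> PsiS" "s \<in> mstar {Q1, Q4}" "reduced w" "p \<in> mstar {P1}"
    "t \<in> {tau1, tau2}" "f = psi \<circ> s \<circ> lam w \<circ> p \<circ> t"
  using assms unfolding second_form_def by blast

lemma tau_PsiS: "tau1 \<in> PsiS" "tau2 \<in> PsiS"
  by (simp_all add: tau1_def tau2_def PsiS_letters)

lemma Q1_Q4_AutF2: "{Q1, Q4} \<subseteq> AutF2" and P1_AutF2: "{P1} \<subseteq> AutF2"
  using moves_AutF2 by (auto simp: moves_def)

lemma second_form_AutF2: "second_form f \<Longrightarrow> f \<in> AutF2"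
proof (elim second_formE)
  fix psi s w p t assume "psi \<in> PsiS" "s \<in> mstar {Q1, Q4}" "p \<in> mstar {P1}" "t \<in> {tau1, tau2}"
    "f = psi \<circ> s \<circ> lam w \<circ> p \<circ> t"
  then show "f \<in> AutF2"
    using mstar_AutF2[OF Q1_Q4_AutF2] mstar_AutF2[OF P1_AutF2] tau_PsiS
    by (auto simp: AutF2_comp lam_in_AutF2 PsiS_AutF2)
qed

lemma second_form_idA: "second_form idA"
proof (rule second_formI[OF tau_PsiS(1) mstar.unit reduced_Nil mstar.unit])
  have "tau1 \<circ> tau1 = idA" by (simp add: tau1_def phi_comp idA_letters word_defs)
  then show "idA = tau1 \<circ> idA \<circ> lam [] \<circ> idA \<circ> tau1"
    using PsiS_AutF2[OF tau_PsiS(1)] by (simp add: lam_Nil_eq_idA idA_in_AutF2)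
qed simp

lemma second_form_PsiS_comp: "psi' \<in> PsiS \<Longrightarrow> second_form f \<Longrightarrow> second_form (psi' \<circ> f)"
proof (elim second_formE)
  fix psi s w p t assume "psi' \<in> PsiS" "psi \<in> PsiS" "s \<in> mstar {Q1, Q4}" "reduced w"
    "p \<in> mstar {P1}" "t \<in> {tau1, tau2}" "f = psi \<circ> s \<circ> lam w \<circ> p \<circ> t"
  then show "second_form (psi' \<circ> f)"
    by (intro second_formI[of "psi' \<circ> psi" s w p t]) (auto simp: PsiS_comp comp_assoc)
qed

lemma second_form_lam_comp: "second_form f \<Longrightarrow> second_form (lam v \<circ> f)"
proof (elim second_formE)
  fix psi s w p t assume psi: "psi \<in> PsiS" and s: "s \<in> mstar {Q1, Q4}" and "reduced w"
    and "p \<in> mstar {P1}" "t \<in> {tau1, tau2}" and f: "f = psi \<circ> s \<circ> lam w \<circ> p \<circ> t"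
  obtain v1 where v1: "lam v \<circ> psi = psi \<circ> lam v1"
    using lam_comp_AutF2[OF PsiS_AutF2[OF psi]] by blast
  obtain v2 where v2: "lam v1 \<circ> s = s \<circ> lam v2"
    using lam_comp_AutF2[OF mstar_AutF2[OF Q1_Q4_AutF2 s]] by blast
  have "lam v \<circ> f = (lam v \<circ> psi) \<circ> s \<circ> lam w \<circ> p \<circ> t" by (simp only: f comp_assoc)
  also have "\<dots> = psi \<circ> (lam v1 \<circ> s) \<circ> lam w \<circ> p \<circ> t" by (simp only: v1 comp_assoc)
  also have "\<dots> = psi \<circ> s \<circ> (lam v2 \<circ> lam w) \<circ> p \<circ> t" by (simp only: v2 comp_assoc)
  also have "\<dots> = psi \<circ> s \<circ> lam (red (w @ v2)) \<circ> p \<circ> t" by (simp only: lam_comp)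
  finally show "second_form (lam v \<circ> f)"
    using psi s \<open>p \<in> _\<close> \<open>t \<in> _\<close> by (intro second_formI) auto
qed

lemma moves_mod_LambdaS:
  "P2 = lam [lb] \<circ> P4" "P3 = lam [lA] \<circ> P1" "Q2 = lam [lB] \<circ> Q4" "Q3 = lam [la] \<circ> Q1"
  unfolding move_defs lam_letters phi_comp by (simp_all add: word_defs)

lemma moves_commutation:
  "P1 \<circ> Q4 = lam [la] \<circ> phi [lB] [la] \<circ> Q1" "P4 \<circ> Q1 = lam [lB] \<circ> phi [lb] [lA] \<circ> Q4"
  "P4 = lam [lB] \<circ> phi [lb] [lA] \<circ> Q4 \<circ> P1"
  unfolding move_defs lam_letters phi_comp by (simp_all add: word_defs)

lemma second_form_Q_comp:
  assumes "q \<in> {Q1, Q4}" "s \<in> mstar {Q1, Q4}" "reduced w" "p \<in> mstar {P1}" "t \<in> {tau1, tau2}"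
  shows "second_form (q \<circ> s \<circ> lam w \<circ> p \<circ> t)"
proof -
  have qs: "q \<circ> s \<in> mstar {Q1, Q4}" using assms(1,2) by (rule mstar.step)
  then have "idA \<circ> (q \<circ> s) = q \<circ> s" using mstar_AutF2[OF Q1_Q4_AutF2] by simp
  then have "q \<circ> s \<circ> lam w \<circ> p \<circ> t = idA \<circ> (q \<circ> s) \<circ> lam w \<circ> p \<circ> t" by simp
  then show ?thesis using second_formI[OF idA_in_PsiS qs assms(3-5)] by blast
qed

lemma second_form_P1_comp:
  assumes s: "s \<in> mstar {Q1, Q4}" and w: "reduced w" and p: "p \<in> mstar {P1}" and t: "t \<in> {tau1, tau2}"
  shows "second_form (P1 \<circ> s \<circ> lam w \<circ> p \<circ> t)"
  using s
proof cases
  case unit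
  have P1: "P1 \<in> AutF2" using P1_AutF2 by blast
  have "P1 \<circ> s \<circ> lam w \<circ> p \<circ> t = lam (P1 w) \<circ> (idA \<circ> idA \<circ> lam [] \<circ> (P1 \<circ> p) \<circ> t)"
    using unit AutF2_comp_lam[OF P1, of w] AutF2_comp[OF P1 mstar_AutF2[OF P1_AutF2 p]]
    by (simp add: lam_Nil_eq_idA comp_assoc P1 idA_in_AutF2)
  moreover have "second_form (idA \<circ> idA \<circ> lam [] \<circ> (P1 \<circ> p) \<circ> t)"
    by (rule second_formI[OF idA_in_PsiS mstar.unit _ mstar.step[OF _ p] t]) simp_all
  ultimately show ?thesis using second_form_lam_comp by metis
next
  case (step q s')
  then consider "q = Q1" | "q = Q4" by blast
  then show ?thesis
  proof cases
    case 1
    have "P1 \<circ> s \<circ> lam w \<circ> p \<circ> t = idA \<circ> s' \<circ> lam w \<circ> p \<circ> t"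
      using step 1 by (simp add: comp_assoc rewriteL_comp_comp[OF moves_inverse(1)])
    then show ?thesis using second_formI[OF idA_in_PsiS step(3) w p t] by simp
  next
    case 2
    have "P1 \<circ> s \<circ> lam w \<circ> p \<circ> t = lam [la] \<circ> (phi [lB] [la] \<circ> (Q1 \<circ> s') \<circ> lam w \<circ> p \<circ> t)"
      using step 2 by (simp add: comp_assoc rewriteL_comp_comp[OF moves_commutation(1)])
    then show ?thesis
      using second_form_lam_comp second_formI[OF PsiS_letters mstar.step[OF _ step(3)] w p t]
      by simp
  qed
qed

lemma second_form_P4_comp:
  assumes s: "s \<in> mstar {Q1, Q4}" and w: "reduced w" and p: "p \<in> mstar {P1}" and t: "t \<in> {tau1, tau2}"
  shows "second_form (P4 \<circ> s \<circ> lam w \<circ> p \<circ> t)"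
  using s
proof cases
  case unit
  have P4: "P4 \<in> AutF2" using moves_AutF2 by (simp add: moves_def)
  have Q4: "Q4 \<in> AutF2" using Q1_Q4_AutF2 by blast
  have "P4 \<circ> s \<circ> lam w \<circ> p \<circ> t = lam (P4 w) \<circ> (P4 \<circ> p \<circ> t)"
    using unit AutF2_comp_lam[OF P4, of w] by (simp add: comp_assoc P4)
  also have "\<dots> = lam (P4 w) \<circ> (lam [lB] \<circ> (phi [lb] [lA] \<circ> (Q4 \<circ> idA) \<circ> lam [] \<circ> (P1 \<circ> p) \<circ> t))"
    by (subst (2) moves_commutation(3)) (simp add: comp_assoc lam_Nil_eq_idA Q4 idA_in_AutF2)
  finally show ?thesis
    using second_form_lam_comp
      second_formI[OF PsiS_letters mstar.step[OF _ mstar.unit] reduced_Nil mstar.step[OF _ p] t]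
    by simp
next
  case (step q s')
  then consider "q = Q4" | "q = Q1" by blast
  then show ?thesis
  proof cases
    case 1
    have "P4 \<circ> s \<circ> lam w \<circ> p \<circ> t = idA \<circ> s' \<circ> lam w \<circ> p \<circ> t"
      using step 1 by (simp add: comp_assoc rewriteL_comp_comp[OF moves_inverse(7)])
    then show ?thesis using second_formI[OF idA_in_PsiS step(3) w p t] by simp
  next
    case 2
    have "P4 \<circ> s \<circ> lam w \<circ> p \<circ> t = lam [lB] \<circ> (phi [lb] [lA] \<circ> (Q4 \<circ> s') \<circ> lam w \<circ> p \<circ> t)"
      using step 2 by (simp add: comp_assoc rewriteL_comp_comp[OF moves_commutation(2)])
    then show ?thesis
      using second_form_lam_comp second_formI[OF PsiS_letters mstar.step[OF _ step(3)] w p t]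
      by simp
  qed
qed

lemma second_form_move_comp:
  assumes g: "g \<in> moves" and s: "s \<in> mstar {Q1, Q4}" and w: "reduced w" and p: "p \<in> mstar {P1}"
    and t: "t \<in> {tau1, tau2}"
  shows "second_form (g \<circ> s \<circ> lam w \<circ> p \<circ> t)"
proof -
  have base: "second_form (g \<circ> s \<circ> lam w \<circ> p \<circ> t)" if "g \<in> {P1, P4, Q1, Q4}" for g
    using that second_form_Q_comp[OF _ s w p t] second_form_P1_comp[OF s w p t]
      second_form_P4_comp[OF s w p t] by blast
  have "g \<in> {P1, P4, Q1, Q4} \<or> (\<exists>v g'. g = lam v \<circ> g' \<and> g' \<in> {P1, P4, Q1, Q4})"
    using g moves_mod_LambdaS unfolding moves_def by blast
  then show ?thesis
    using base second_form_lam_comp by (auto simp: comp_assoc)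
qed

lemma second_form_moves_comp:
  assumes g: "g \<in> moves" and f: "second_form f"
  shows "second_form (g \<circ> f)"
proof -
  obtain psi s w p t where psi: "psi \<in> PsiS" and rest: "s \<in> mstar {Q1, Q4}" "reduced w"
    "p \<in> mstar {P1}" "t \<in> {tau1, tau2}" and f_eq: "f = psi \<circ> s \<circ> lam w \<circ> p \<circ> t"
    using f by (rule second_formE)
  obtain g' where g': "g' \<in> moves" "g \<circ> psi = psi \<circ> g'"
    using moves_comp_PsiS[OF g psi] by blast
  have "g \<circ> f = psi \<circ> (g' \<circ> s \<circ> lam w \<circ> p \<circ> t)"
    by (simp only: f_eq comp_assoc rewriteL_comp_comp[OF g'(2)])
  then show ?thesis using second_form_PsiS_comp[OF psi second_form_move_comp[OF g'(1) rest]] by simp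
qed

lemma autinv_eqI:
  assumes "f \<in> AutF2" "g \<in> AutF2" "g \<circ> f = idA" "f \<circ> g = idA"
  shows "autinv f = g"
  unfolding autinv_def
proof (rule the_equality)
  show "g \<in> AutF2 \<and> (\<forall>w\<in>F2. g (f w) = w)"
    using assms(2,3) by (metis F2_iff_reduced comp_apply idA_apply red_reduced)
next
  fix h assume h: "h \<in> AutF2 \<and> (\<forall>w\<in>F2. h (f w) = w)"
  have "f (g u) = u" if "reduced u" for u
    using fun_cong[OF assms(4), of u] that by (simp add: idA_apply red_reduced)
  moreover have "h (f (g u)) = g u" for u
    using h AutF2_reduced[OF assms(2)] by simp
  ultimately have "h ga = g ga" "h gb = g gb" by (metis reduced_ga reduced_gb)+
  then show "h = g"
    using AutF2_eq_phi h assms(2) by metis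
qed

definition "swap_inv = phi [lB] [lA]"

lemma setinv_Sigma0: "setinv Sigma0 = {Q1, swap_inv}"
proof -
  have Sigma0: "Sigma0 = {P1, swap_inv}"
    by (simp add: Sigma0_def P1_def swap_inv_def gmult_def ga_def gb_def red_reduced reduced_Cons
        inv_letter_def)
  have swap: "swap_inv \<in> AutF2" "swap_inv \<circ> swap_inv = idA"
    by (simp_all add: swap_inv_def PsiS_AutF2 PsiS_letters phi_comp idA_letters word_defs)
  have "autinv P1 = Q1" using autinv_eqI moves_AutF2 moves_inverse(1,2) by (simp add: moves_def)
  moreover have "autinv swap_inv = swap_inv" using autinv_eqI[OF swap(1,1,2,2)] .
  ultimately show ?thesis by (simp add: setinv_def Sigma0)
qed

lemma mstar_Q1_Q4_subset: "mstar {Q1, Q4} \<subseteq> mstar {Q1, swap_inv}"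
proof
  fix s assume "s \<in> mstar {Q1, Q4}"
  then show "s \<in> mstar {Q1, swap_inv}"
  proof (induction s rule: mstar.induct)
    case (step q m)
    have "Q4 = swap_inv \<circ> Q1 \<circ> swap_inv"
      by (simp add: swap_inv_def Q1_def Q4_def phi_comp word_defs)
    then have "q \<circ> m = Q1 \<circ> m \<or> q \<circ> m = swap_inv \<circ> (Q1 \<circ> (swap_inv \<circ> m))"
      using step.hyps(1) by (metis comp_assoc insert_iff singletonD)
    moreover have "Q1 \<circ> m \<in> mstar {Q1, swap_inv}"
      "swap_inv \<circ> (Q1 \<circ> (swap_inv \<circ> m)) \<in> mstar {Q1, swap_inv}"
      using step.IH by (simp_all add: mstar.step)
    ultimately have "q \<circ> m \<in> mstar {Q1, swap_inv}" by auto
    then show ?case by (simp add: comp_def)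
  qed (rule mstar.unit)
qed

theorem AutF2_eq_second_form:
  "AutF2 = PsiS \<cdot>\<cdot> mstar (setinv Sigma0) \<cdot>\<cdot> LambdaS \<cdot>\<cdot> mstar {phi ga (gmult gb ga)}
     \<cdot>\<cdot> {phi (ginv ga) gb, phi (ginv ga) (ginv gb)}"
proof -
  have P1_eq: "phi ga (gmult gb ga) = P1"
    by (simp add: P1_def gmult_def ga_def gb_def red_reduced reduced_Cons inv_letter_def)
  have tau_eq: "{phi (ginv ga) gb, phi (ginv ga) (ginv gb)} = {tau1, tau2}"
    by (simp add: tau1_def tau2_def ga_def gb_def inv_letter_def)
  let ?T = "PsiS \<cdot>\<cdot> mstar (setinv Sigma0) \<cdot>\<cdot> LambdaS \<cdot>\<cdot> mstar {P1} \<cdot>\<cdot> {tau1, tau2}"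
  have "{f. second_form f} = AutF2"
  proof (rule AutF2_eq_of_closed)
    fix g f assume "g \<in> generators" "f \<in> {f. second_form f}"
    then show "g \<circ> f \<in> {f. second_form f}"
      using second_form_lam_comp second_form_PsiS_comp second_form_moves_comp
      by (auto simp: generators_def LambdaS_def)
  qed (use second_form_idA second_form_AutF2 in auto)
  moreover have "{f. second_form f} \<subseteq> ?T"
    using mstar_Q1_Q4_subset
    by (auto elim!: second_formE intro!: setprod_memI simp: setinv_Sigma0 LambdaS_def)
  moreover have "?T \<subseteq> AutF2"
  proof -
    have "setinv Sigma0 \<subseteq> AutF2" "{tau1, tau2} \<subseteq> AutF2"
      using moves_AutF2 PsiS_AutF2 tau_PsiS
      by (auto simp: setinv_Sigma0 moves_def swap_inv_def PsiS_letters)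
    then show ?thesis
      using PsiS_AutF2 mstar_AutF2 LambdaS_AutF2 mstar_AutF2[OF P1_AutF2]
      by (auto simp: setprod_def intro!: AutF2_comp)
  qed
  ultimately show ?thesis unfolding P1_eq tau_eq by blast
qed

theorem mainTheorem11:
  shows "AutF2 = LambdaS \<cdot>\<cdot> PsiS \<cdot>\<cdot> mstar PhiS \<cdot>\<cdot> DeltaS
       \<and> AutF2 = PsiS \<cdot>\<cdot> mstar (setinv Sigma0) \<cdot>\<cdot> LambdaS \<cdot>\<cdot> mstar {phi ga (gmult gb ga)}
                 \<cdot>\<cdot> {phi (ginv ga) gb, phi (ginv ga) (ginv gb)}"
  using AutF2_eq_first_form AutF2_eq_second_form by blast

end
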